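(* Let $\sigma,\tau,\bar\sigma,\bar\tau$ satisfy the Standing Hypothesis, and let $m\ge 1$, $n\ge 2$ and $0\le x\le\min\{m,n-1\}$ be integers. Then $$\{\sigma,m,n,\tau\,|\,\bar\sigma,x,\bar\tau\}-\{\sigma,m+1,n-1,\tau\,|\,\bar\sigma,x,\bar\tau\}=A-B,$$ where $$A=\begin{cases}\{\sigma,m,n,\tau\,|\,\bar\sigma,x+1,\bar\tau\}&\text{if }x<m,\\ -\{\sigma\backslash\sigma_s,m+\sigma_s,n,\tau\,|\,\bar\sigma\backslash\bar\sigma_s,m+1,\bar\tau\}&\text{if }x=m,\end{cases}$$ $$B=\begin{cases}\{\sigma,m+1,n-1,\tau\,|\,\bar\sigma,x+1,\bar\tau\}&\text{if }x<n-1,\\ -\{\sigma,m+1,n-1+\tau_1,\tau\backslash\tau_1\,|\,\bar\sigma,n,\bar\tau\backslash\bar\tau_1\}&\text{if }x=n-1.\end{cases}$$ If $s=0$ the term containing $\sigma\backslash\sigma_s$ is replaced by $0$; if $t=0$ the term containing $\tau\backslash\tau_1$ is replaced by $0$.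
   Context: Skew diagrams: for partitions $\mu\subseteq\lambda$, the skew diagram $\lambda/\mu$ is the set of boxes $(i,j)$ (row $i$, column $j$) with $\mu_i<j\le\lambda_i$; two skew diagrams are identified if one is obtained from the other by deleting empty rows or empty columns. The skew Schur function is $s_{\lambda/\mu}=\sum_T x^{c(T)}$, summed over semistandard Young tableaux $T$ of shape $\lambda/\mu$ (positive integer fillings, rows weakly increasing left to right, columns strictly increasing top to bottom), where $x^{c(T)}=\prod_i x_i^{\#\{i\text{'s in }T\}}$. Overlap notation: for integer sequences $\alpha=(\alpha_1,\dots,\alpha_L)$ with all $\alpha_i\ge1$ and $\beta=(\beta_1,\dots,\beta_{L-1})$ with $0\le\beta_i\le\min\{\alpha_i,\alpha_{i+1}\}$, $(\alpha\,|\,\beta)$ denotes the skew diagram $\lambda/\mu$ with $L$ nonempty rows such that $\lambda_i-\mu_i=\alpha_i$ for all $i$ and $\lambda_{i+1}-\mu_i=\beta_i$ for $1\le i<L$ (row $i$ has $\alpha_i$ boxes and rows $i,i+1$ share exactly $\beta_i$ columns, row $i+1$ lying weakly to the left); $\{\alpha\,|\,\beta\}$ denotes its skew Schur function $s_{\lambda/\mu}$. Commas inside $\{\cdot|\cdot\}$ denote concatenation of sequences; $a^j$ denotes $j$ consecutive copies of $a$ (empty if $j=0$). Standing Hypothesis: $\sigma=(\sigma_1,\dots,\sigma_s)$ and $\tau=(\tau_1,\dots,\tau_t)$ are compositions (sequences of positive integers) with $s,t\ge0$; $\bar\sigma=(\bar\sigma_1,\dots,\bar\sigma_s)$ and $\bar\tau=(\bar\tau_1,\dots,\bar\tau_t)$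 are sequences of non-negative integers; $\bar\sigma_s=1$ if $s>0$; $\bar\tau_1=1$ if $t>0$; $\bar\sigma_i\le\min\{\sigma_i,\sigma_{i+1}\}$ for $1\le i<s$, and $\bar\tau_i\le\min\{\tau_i,\tau_{i-1}\}$ for $1<i\le t$. (Thus in $\{\sigma,m,n,\tau\,|\,\bar\sigma,x,\bar\tau\}$, $\bar\sigma_s$ is the overlap of row $\sigma_s$ with row $m$, $x$ that of rows $m,n$, and $\bar\tau_1$ that of row $n$ with row $\tau_1$.) $\sigma\backslash\sigma_s$ denotes $\sigma$ with its last part removed, $\tau\backslash\tau_1$ denotes $\tau$ with its first part removed, and similarly $\bar\sigma\backslash\bar\sigma_s$, $\bar\tau\backslash\bar\tau_1$. When $s=0$ (resp. $t=0$), $\sigma,\bar\sigma$ (resp. $\tau,\bar\tau$) are simply absent. *)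

theory Defs
  imports Main
begin

text \<open>Skew diagram lambda/mu (partitions given as lists of equal length, row i is 0-based,
columns are 1-based): boxes (i,j) with mu_i < j <= lambda_i.\<close>
definition skew_boxes :: "nat list \<Rightarrow> nat list \<Rightarrow> (nat \<times> nat) set" where
  "skew_boxes lam mu = {(i, j). i < length lam \<and> mu ! i < j \<and> j \<le> lam ! i}"

definition ssyt :: "nat list \<Rightarrow> nat list \<Rightarrow> (nat \<times> nat \<Rightarrow> nat) \<Rightarrow> bool" where
  "ssyt lam mu T \<longleftrightarrow>
     (\<forall>b. b \<notin> skew_boxes lam mu \<longrightarrow> T b = 0) \<and>
     (\<forall>b\<in>skew_boxes lam mu. 1 \<le> T b) \<and>
     (\<forall>i j j'. (i, j) \<in> skew_boxes lam mu \<and> (i, j') \<in> skew_boxes lam mu \<and> j < j'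
                 \<longrightarrow> T (i, j) \<le> T (i, j')) \<and>
     (\<forall>i i' j. (i, j) \<in> skew_boxes lam mu \<and> (i', j) \<in> skew_boxes lam mu \<and> i < i'
                 \<longrightarrow> T (i, j) < T (i', j))"

definition content :: "nat list \<Rightarrow> nat list \<Rightarrow> (nat \<times> nat \<Rightarrow> nat) \<Rightarrow> nat \<Rightarrow> nat" where
  "content lam mu T k = card {b \<in> skew_boxes lam mu. T b = k}"

text \<open>The skew Schur function s_{lambda/mu}, represented by its coefficient function:
monomial x^c (c an exponent vector) maps to the number of SSYT T with c(T) = c.\<close>
definition skew_schur :: "nat list \<Rightarrow> nat list \<Rightarrow> (nat \<Rightarrow> nat) \<Rightarrow> int" where
  "skew_schur lam mu c = int (card {T. ssyt lam mu T \<and> content lam mu T = c})"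

text \<open>Row i (0-based) occupies integer columns
[a_i, a_i + alpha_i) with a_0 = 0 and a_{i+1} + alpha_{i+1} = a_i + beta_i.
lambda, mu are obtained by shifting so that the last row starts at column 1.\<close>
definition ov_start :: "nat list \<Rightarrow> nat list \<Rightarrow> nat \<Rightarrow> int" where
  "ov_start \<alpha> \<beta> i = (\<Sum>k<i. int (\<beta> ! k) - int (\<alpha> ! Suc k))"

definition ov_lambda :: "nat list \<Rightarrow> nat list \<Rightarrow> nat list" where
  "ov_lambda \<alpha> \<beta> = map (\<lambda>i. nat (ov_start \<alpha> \<beta> i + int (\<alpha> ! i) - ov_start \<alpha> \<beta> (length \<alpha> - 1)))
                       [0..<length \<alpha>]"

definition ov_mu :: "nat list \<Rightarrow> nat list \<Rightarrow> nat list" where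
  "ov_mu \<alpha> \<beta> = map (\<lambda>i. nat (ov_start \<alpha> \<beta> i - ov_start \<alpha> \<beta> (length \<alpha> - 1)))
                       [0..<length \<alpha>]"

definition ov_schur :: "nat list \<Rightarrow> nat list \<Rightarrow> (nat \<Rightarrow> nat) \<Rightarrow> int" where
  "ov_schur \<alpha> \<beta> = skew_schur (ov_lambda \<alpha> \<beta>) (ov_mu \<alpha> \<beta>)"

definition standing_hyp :: "nat list \<Rightarrow> nat list \<Rightarrow> nat list \<Rightarrow> nat list \<Rightarrow> bool" where
  "standing_hyp \<sigma> \<tau> \<sigma>b \<tau>b \<longleftrightarrow>
     (\<forall>a\<in>set \<sigma>. 1 \<le> a) \<and> (\<forall>a\<in>set \<tau>. 1 \<le> a) \<and>
     length \<sigma>b = length \<sigma> \<and> length \<tau>b = length \<tau> \<and>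
     (\<sigma> \<noteq> [] \<longrightarrow> last \<sigma>b = 1) \<and> (\<tau> \<noteq> [] \<longrightarrow> hd \<tau>b = 1) \<and>
     (\<forall>i. Suc i < length \<sigma> \<longrightarrow> \<sigma>b ! i \<le> min (\<sigma> ! i) (\<sigma> ! Suc i)) \<and>
     (\<forall>i. 0 < i \<and> i < length \<tau> \<longrightarrow> \<tau>b ! i \<le> min (\<tau> ! i) (\<tau> ! (i - 1)))"

end

theory Submission
  imports Defs "HOL-Library.Multiset"
begin

(* A semistandard filling of (alpha | beta) is encoded by the list of its rows: row i is a sorted
   list of alpha_i positive entries, and consecutive rows are column strict on their beta_i
   shared columns (row_filling).  Cutting such a list at the two middle rows turns every
   coefficient in the statement into the number of quadruples (sigma rows, u, v, tau rows)
   of a given content (ov_schur_split).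

   The key tool is the switching of two sorted rows at their first column violation, as in
   the Lindstroem-Gessel-Viennot lemma (switch_bij): pairs of middle rows of lengths m, n
   violating an overlap of x columns correspond to pairs of lengths m+n-x+1, x-1, a number
   depending on m+n only.  Hence the left-hand side equals the corresponding difference for
   unconstrained middle rows (middle_difference), and raising x by one gives A - B.  In the
   boundary cases x = m and x = n-1 the switching is done with an entry of the neighbouring
   sigma row resp. tau row as a sentinel (capped_switch_bij, headed_switch_bij), which produces
   the fillings of the merged diagrams of the statement. *)

definition row_ok :: "nat \<Rightarrow> nat list \<Rightarrow> bool" where
  "row_ok k w \<longleftrightarrow> length w = k \<and> sorted w \<and> (\<forall>v\<in>set w. 0 < v)"

(* Column strictness between a row u and the row v below it when the two rows share y
   columns (v lies weakly to the left): the first y entries of u are strictly smaller than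
   the last y entries of v. *)
definition col_strict :: "nat \<Rightarrow> nat list \<Rightarrow> nat list \<Rightarrow> bool" where
  "col_strict y u v \<longleftrightarrow> (\<forall>k<y. u!k < v!(k + length v - y))"

definition first_index :: "nat \<Rightarrow> (nat \<Rightarrow> bool) \<Rightarrow> nat" where
  "first_index y C = (LEAST k. k = y \<or> (k < y \<and> C k))"

lemma first_index_le: "first_index y C \<le> y"
  unfolding first_index_def by (rule Least_le) simp

lemma first_index_lt: "first_index y C < y \<Longrightarrow> C (first_index y C)"
proof -
  assume a: "first_index y C < y"
  have "(\<lambda>k. k = y \<or> (k < y \<and> C k)) (first_index y C)"
    unfolding first_index_def by (rule LeastI[of _ y]) simp
  with a show ?thesis by auto
qed

lemma first_index_min: "k < first_index y C \<Longrightarrow> \<not> C k"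
proof -
  assume a: "k < first_index y C"
  have "\<not> (k = y \<or> (k < y \<and> C k))"
    using a unfolding first_index_def by (rule not_less_Least)
  then show ?thesis using a first_index_le[of y C] by auto
qed

lemma first_index_eq:
  "k \<le> y \<Longrightarrow> (k < y \<Longrightarrow> C k) \<Longrightarrow> (\<And>j. j < k \<Longrightarrow> \<not> C j) \<Longrightarrow> first_index y C = k"
  unfolding first_index_def by (rule Least_equality) (auto simp: not_less[symmetric])

lemma sorted_append_nonempty:
  "u \<noteq> [] \<Longrightarrow> sorted (u @ r # rs) \<longleftrightarrow> sorted u \<and> sorted (r # rs) \<and> last u \<le> r"
  by (induction u rule: induct_list012) (auto simp: sorted2 intro: order_trans)

lemma sorted_snoc_iff: "u \<noteq> [] \<Longrightarrow> sorted (u @ [h]) \<longleftrightarrow> sorted u \<and> last u \<le> h"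
  by (induction u rule: induct_list012) (auto simp: sorted2)

lemma sorted_Cons_iff: "v \<noteq> [] \<Longrightarrow> sorted (t # v) \<longleftrightarrow> sorted v \<and> t \<le> hd v"
  by (cases v) (auto simp: sorted2)

lemma last_butlast_nth: "2 \<le> length xs \<Longrightarrow> last (butlast xs) = xs ! (length xs - 2)"
proof -
  assume a: "2 \<le> length xs"
  then have b: "butlast xs \<noteq> []" by (cases xs rule: rev_cases) auto
  have "last (butlast xs) = butlast xs ! (length (butlast xs) - 1)" using b by (simp add: last_conv_nth)
  also have "\<dots> = xs ! (length xs - 2)" using a by (simp add: nth_butlast numeral_2_eq_2)
  finally show ?thesis .
qed

(* A prefix of one sorted list followed by a suffix of another is sorted when the two
   entries meeting at the junction are in order; this is what makes switching work. *)
lemma sorted_take_drop_app: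
  assumes "sorted xs" "sorted ys" "a \<le> length xs"
    and "0 < a \<Longrightarrow> b < length ys \<Longrightarrow> xs!(a-1) \<le> ys!b"
  shows "sorted (take a xs @ drop b ys)"
proof (cases "a = 0 \<or> length ys \<le> b")
  case True
  then show ?thesis using assms(1,2) by (auto simp: sorted_wrt_take sorted_wrt_drop)
next
  case False
  then have drop: "drop b ys = ys!b # drop (Suc b) ys" by (simp add: Cons_nth_drop_Suc)
  have ne: "take a xs \<noteq> []" using False assms(3) by auto
  then have "last (take a xs) = xs!(a-1)" using False assms(3) by (simp add: last_conv_nth min_def)
  moreover note ne
  moreover have "sorted (ys!b # drop (Suc b) ys)" using assms(2) drop by (metis sorted_wrt_drop)
  ultimately show ?thesis
    using assms False drop by (simp add: sorted_append_nonempty sorted_wrt_take)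
qed

(* Switching two sorted rows at their first crossing, as in the Lindstroem-Gessel-Viennot
   argument.  Row P lies above row Q with y shared columns; writing d for the number of
   columns of Q left of the overlap, column k of the overlap compares P!k with Q!(k+d).  At
   the first k where column strictness fails, the tails of the two rows are exchanged. *)
definition switch :: "nat \<Rightarrow> nat \<Rightarrow> nat list \<times> nat list \<Rightarrow> nat list \<times> nat list" where
  "switch y d = (\<lambda>(P, Q). let k = first_index y (\<lambda>k. Q!(k+d) \<le> P!k) in
     (take (k+d+1) Q @ drop k P, take k P @ drop (k+d+1) Q))"

definition unswitch :: "nat \<Rightarrow> nat list \<times> nat list \<Rightarrow> nat list \<times> nat list" where
  "unswitch d = (\<lambda>(P', Q'). let k = first_index (length Q') (\<lambda>k. P'!(k+d) \<le> Q'!k) in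
     (take k Q' @ drop (k+d+1) P', take (k+d+1) P' @ drop k Q'))"

definition crossing_pairs :: "nat \<Rightarrow> nat \<Rightarrow> nat \<Rightarrow> (nat list \<times> nat list) set" where
  "crossing_pairs m n y =
     {(P, Q). sorted P \<and> sorted Q \<and> length P = m \<and> length Q = n \<and> \<not> col_strict y P Q}"

definition sorted_pairs :: "nat \<Rightarrow> nat \<Rightarrow> (nat list \<times> nat list) set" where
  "sorted_pairs p q = {(P, Q). sorted P \<and> sorted Q \<and> length P = p \<and> length Q = q}"

lemma first_crossing:
  assumes "length Q = y + d" "\<not> col_strict y P Q"
  obtains k where "k < y" "\<And>i. i < k \<Longrightarrow> P!i < Q!(i+d)" "Q!(k+d) \<le> P!k"
    "switch y d (P, Q) = (take (k+d+1) Q @ drop k P, take k P @ drop (k+d+1) Q)"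
proof -
  define C where "C k \<longleftrightarrow> Q!(k+d) \<le> P!k" for k
  define k where "k = first_index y C"
  obtain j where "j < y" "C j"
    using assms unfolding col_strict_def C_def by (auto simp: not_less add.commute)
  then have ky: "k < y"
    using first_index_le[of y C] first_index_min[of j y C] unfolding k_def by fastforce
  show ?thesis
  proof
    show "k < y" by (rule ky)
    show "\<And>i. i < k \<Longrightarrow> P!i < Q!(i+d)"
      using first_index_min[of _ y C] unfolding k_def C_def by (meson not_le)
    show "Q!(k+d) \<le> P!k" using first_index_lt[of y C] ky unfolding k_def C_def by simp
    show "switch y d (P, Q) = (take (k+d+1) Q @ drop k P, take k P @ drop (k+d+1) Q)"
      unfolding switch_def k_def C_def by (simp add: Let_def)
  qed
qed

lemma switch_props:
  assumes "1 \<le> y" "y \<le> m" "y \<le> n" "(P, Q) \<in> crossing_pairs m n y"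
  defines "PQ' \<equiv> switch y (n-y) (P, Q)"
  shows "PQ' \<in> sorted_pairs (m+n-y+1) (y-1)"
    and "mset (fst PQ') + mset (snd PQ') = mset P + mset Q"
    and "last (fst PQ') = last P" and "hd (fst PQ') = hd Q"
proof -
  have sP: "sorted P" and sQ: "sorted Q" and lP: "length P = m" and lQ: "length Q = n"
    and nr: "\<not> col_strict y P Q" using assms(4) by (auto simp: crossing_pairs_def)
  define d where "d = n - y"
  have lQd: "length Q = y + d" using lQ assms unfolding d_def by simp
  obtain k where ky: "k < y" and kmin: "\<And>i. i < k \<Longrightarrow> P!i < Q!(i+d)"
    and Ck: "Q!(k+d) \<le> P!k" and sw0: "switch y d (P, Q) = (take (k+d+1) Q @ drop k P, take k P @ drop (k+d+1) Q)"
    using first_crossing[OF lQd nr] by blast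
  have sw: "PQ' = (take (k+d+1) Q @ drop k P, take k P @ drop (k+d+1) Q)"
    unfolding PQ'_def d_def[symmetric] by (rule sw0)
  have "sorted (take (k+d+1) Q @ drop k P)"
    by (rule sorted_take_drop_app[OF sQ sP]) (use ky lQ assms d_def Ck in auto)
  moreover have "sorted (take k P @ drop (k+d+1) Q)"
  proof (rule sorted_take_drop_app[OF sP sQ])
    show "k \<le> length P" using ky lP assms by simp
    assume "0 < k" "k+d+1 < length Q"
    have "P!(k-1) < Q!(k-1+d)" using kmin[of "k-1"] \<open>0 < k\<close> by simp
    also have "Q!(k-1+d) \<le> Q!(k+d+1)" using sorted_nth_mono[OF sQ] \<open>k+d+1 < length Q\<close> by simp
    finally show "P!(k-1) \<le> Q!(k+d+1)" by simp
  qed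
  ultimately show "PQ' \<in> sorted_pairs (m+n-y+1) (y-1)"
    using sw ky lP lQ assms d_def unfolding sorted_pairs_def by auto
  have "mset P = mset (take k P) + mset (drop k P)" "mset Q = mset (take (k+d+1) Q) + mset (drop (k+d+1) Q)"
    by (simp_all flip: mset_append)
  then show "mset (fst PQ') + mset (snd PQ') = mset P + mset Q"
    using sw by (simp add: ac_simps)
  show "last (fst PQ') = last P" using sw ky lP assms by simp
  have "Q \<noteq> []" using lQ assms by auto
  then show "hd (fst PQ') = hd Q" using sw by (simp add: hd_append hd_take)
qed

lemma unswitch_switch:
  assumes "1 \<le> y" "y \<le> m" "y \<le> n" "(P, Q) \<in> crossing_pairs m n y"
  shows "unswitch (n-y) (switch y (n-y) (P, Q)) = (P, Q)"
proof -
  have sQ: "sorted Q" and lP: "length P = m" and lQ: "length Q = n"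
    and nr: "\<not> col_strict y P Q" using assms(4) by (auto simp: crossing_pairs_def)
  define d where "d = n - y"
  have lQd: "length Q = y + d" using lQ assms unfolding d_def by simp
  obtain k where ky: "k < y" and kmin: "\<And>i. i < k \<Longrightarrow> P!i < Q!(i+d)"
    and sw: "switch y d (P, Q) = (take (k+d+1) Q @ drop k P, take k P @ drop (k+d+1) Q)"
    using first_crossing[OF lQd nr] by blast
  define P' where "P' = take (k+d+1) Q @ drop k P"
  define Q' where "Q' = take k P @ drop (k+d+1) Q"
  have lQ': "length Q' = y - 1" unfolding Q'_def using ky lP lQ assms d_def by auto
  (* the switched pair has its first crossing at the same column k *)
  have "first_index (length Q') (\<lambda>i. P'!(i+d) \<le> Q'!i) = k"
  proof (rule first_index_eq)
    show "k \<le> length Q'" using lQ' ky by simp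
  next
    assume "k < length Q'"
    then have "k+d+1 < n" using lQ' d_def assms by simp
    have "P'!(k+d) = Q!(k+d)" unfolding P'_def using ky lQ d_def assms by (simp add: nth_append)
    moreover have "Q'!k = Q!(k+d+1)" unfolding Q'_def using ky lP lQ d_def assms \<open>k+d+1 < n\<close>
      by (simp add: nth_append)
    moreover have "Q!(k+d) \<le> Q!(k+d+1)" using sorted_nth_mono[OF sQ] \<open>k+d+1 < n\<close> lQ by simp
    ultimately show "P'!(k+d) \<le> Q'!k" by simp
  next
    fix i assume "i < k"
    have "i + d < length (take (k+d+1) Q)" using ky lQ d_def assms \<open>i < k\<close> by simp
    then have "P'!(i+d) = Q!(i+d)" unfolding P'_def nth_append by simp
    moreover have "Q'!i = P!i" unfolding Q'_def using ky lP assms \<open>i < k\<close> by (simp add: nth_append)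
    ultimately show "\<not> P'!(i+d) \<le> Q'!i" using kmin[OF \<open>i < k\<close>] by simp
  qed
  moreover have "take k Q' = take k P" "drop (k+d+1) P' = drop k P"
    "take (k+d+1) P' = take (k+d+1) Q" "drop k Q' = drop (k+d+1) Q"
    unfolding P'_def Q'_def using ky lP lQ d_def assms by simp_all
  ultimately have "unswitch d (P', Q') = (P, Q)" unfolding unswitch_def by (simp add: Let_def)
  moreover have "switch y (n-y) (P, Q) = (P', Q')" using sw unfolding P'_def Q'_def d_def .
  ultimately show ?thesis unfolding d_def by simp
qed

lemma first_descent:
  assumes "length Q' = q"
  obtains k where "k \<le> q" "\<And>i. i < k \<Longrightarrow> Q'!i < P'!(i+d)" "k < q \<Longrightarrow> P'!(k+d) \<le> Q'!k"
    "unswitch d (P', Q') = (take k Q' @ drop (k+d+1) P', take (k+d+1) P' @ drop k Q')"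
proof
  define C where "C i \<longleftrightarrow> P'!(i+d) \<le> Q'!i" for i
  show "first_index q C \<le> q" by (rule first_index_le)
  show "\<And>i. i < first_index q C \<Longrightarrow> Q'!i < P'!(i+d)"
    using first_index_min unfolding C_def by (metis not_le)
  show "first_index q C < q \<Longrightarrow> P'!(first_index q C + d) \<le> Q'!first_index q C"
    using first_index_lt[of q C] unfolding C_def by simp
  show "unswitch d (P', Q') = (take (first_index q C) Q' @ drop (first_index q C + d + 1) P',
      take (first_index q C + d + 1) P' @ drop (first_index q C) Q')"
    unfolding unswitch_def C_def using assms by (simp add: Let_def)
qed

lemma unswitch_props:
  assumes "1 \<le> y" "y \<le> m" "y \<le> n" "(P', Q') \<in> sorted_pairs (m+n-y+1) (y-1)"
  shows "unswitch (n-y) (P', Q') \<in> crossing_pairs m n y"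
    and "switch y (n-y) (unswitch (n-y) (P', Q')) = (P', Q')"
proof -
  define d where "d = n - y"
  have sP': "sorted P'" and sQ': "sorted Q'" and lP': "length P' = m+d+1" and lQ': "length Q' = y-1"
    using assms unfolding sorted_pairs_def d_def by auto
  obtain k where kle: "k \<le> y - 1" and kmin: "\<And>i. i < k \<Longrightarrow> Q'!i < P'!(i+d)"
    and Ck: "k < y - 1 \<Longrightarrow> P'!(k+d) \<le> Q'!k"
    and us0: "unswitch d (P', Q') = (take k Q' @ drop (k+d+1) P', take (k+d+1) P' @ drop k Q')"
    using first_descent[OF lQ'] by blast
  define P where "P = take k Q' @ drop (k+d+1) P'"
  define Q where "Q = take (k+d+1) P' @ drop k Q'"
  have us: "unswitch d (P', Q') = (P, Q)" unfolding P_def Q_def by (rule us0)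
  have km: "k < m" using kle assms by simp
  have lP: "length P = m" and lQ: "length Q = n"
    unfolding P_def Q_def using kle lQ' lP' km assms d_def by auto
  have sP: "sorted P" unfolding P_def
  proof (rule sorted_take_drop_app[OF sQ' sP'])
    show "k \<le> length Q'" using kle lQ' by simp
    assume "0 < k" "k+d+1 < length P'"
    have "Q'!(k-1) < P'!(k-1+d)" using kmin[of "k-1"] \<open>0 < k\<close> by simp
    also have "P'!(k-1+d) \<le> P'!(k+d+1)" using sorted_nth_mono[OF sP'] \<open>k+d+1 < length P'\<close> by simp
    finally show "Q'!(k-1) \<le> P'!(k+d+1)" by simp
  qed
  have sQ: "sorted Q" unfolding Q_def
    by (rule sorted_take_drop_app[OF sP' sQ']) (use kle lP' lQ' km Ck in auto)
  have "P!k = P'!(k+d+1)" "Q!(k+d) = P'!(k+d)"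
    unfolding P_def Q_def using kle lQ' km lP' by (simp_all add: nth_append)
  then have CPk: "Q!(k+d) \<le> P!k" using sorted_nth_mono[OF sP', of "k+d" "k+d+1"] lP' km by simp
  have "\<not> col_strict y P Q" unfolding col_strict_def using lQ CPk kle assms d_def
    by (auto simp: not_less intro!: exI[of _ k])
  then show "unswitch (n-y) (P', Q') \<in> crossing_pairs m n y"
    using us sP sQ lP lQ unfolding crossing_pairs_def d_def by simp
  (* the recovered pair has its first crossing at column k again *)
  have "first_index y (\<lambda>i. Q!(i+d) \<le> P!i) = k"
  proof (rule first_index_eq)
    show "k \<le> y" using kle by simp
    show "k < y \<Longrightarrow> Q!(k+d) \<le> P!k" by (rule CPk)
    fix i assume "i < k"
    have "P!i = Q'!i" "Q!(i+d) = P'!(i+d)"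
      unfolding P_def Q_def using kle lQ' km lP' \<open>i < k\<close> by (simp_all add: nth_append)
    then show "\<not> Q!(i+d) \<le> P!i" using kmin[OF \<open>i < k\<close>] by simp
  qed
  moreover have "take (k+d+1) Q = take (k+d+1) P'" "drop k P = drop (k+d+1) P'"
    "take k P = take k Q'" "drop (k+d+1) Q = drop k Q'"
    unfolding P_def Q_def using kle lP' lQ' km by simp_all
  ultimately show "switch y (n-y) (unswitch (n-y) (P', Q')) = (P', Q')"
    using us unfolding switch_def d_def by simp
qed

(* Switching is a bijection between crossing pairs of lengths (m, n) and all sorted pairs of
   lengths (m+n-y+1, y-1); the latter depends on m and n only through m+n. *)
lemma switch_bij:
  assumes "1 \<le> y" "y \<le> m" "y \<le> n"
  shows "bij_betw (switch y (n-y)) (crossing_pairs m n y) (sorted_pairs (m+n-y+1) (y-1))"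
proof (rule bij_betw_byWitness[where f'="unswitch (n-y)"])
  show "\<forall>a\<in>crossing_pairs m n y. unswitch (n-y) (switch y (n-y) a) = a"
    using unswitch_switch[OF assms] by auto
  show "\<forall>a'\<in>sorted_pairs (m+n-y+1) (y-1). switch y (n-y) (unswitch (n-y) a') = a'"
    using unswitch_props(2)[OF assms] by auto
  show "switch y (n-y) ` crossing_pairs m n y \<subseteq> sorted_pairs (m+n-y+1) (y-1)"
    using switch_props(1)[OF assms] by auto
  show "unswitch (n-y) ` sorted_pairs (m+n-y+1) (y-1) \<subseteq> crossing_pairs m n y"
    using unswitch_props(1)[OF assms] by auto
qed

lemma card_middle_bij:
  assumes bij: "\<And>p q. bij_betw (f p q) (A p q) (B p q)"
    and XY: "\<And>p q u v. (u, v) \<in> A p q \<Longrightarrow> X p u v q = Y p (fst (f p q (u, v))) (snd (f p q (u, v))) q"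
  shows "card {(p, u, v, q). (u, v) \<in> A p q \<and> X p u v q} = card {(p, u, v, q). (u, v) \<in> B p q \<and> Y p u v q}"
    (is "card ?SA = card ?SB")
proof -
  let ?g = "\<lambda>p q. inv_into (A p q) (f p q)"
  define F where "F = (\<lambda>(p, u, v, q). (p, fst (f p q (u, v)), snd (f p q (u, v)), q))"
  define G where "G = (\<lambda>(p, u, v, q). (p, fst (?g p q (u, v)), snd (?g p q (u, v)), q))"
  have inv: "\<And>p q a. a \<in> A p q \<Longrightarrow> ?g p q (f p q a) = a"
    by (rule bij_betw_inv_into_left[OF bij])
  have inv': "\<And>p q b. b \<in> B p q \<Longrightarrow> f p q (?g p q b) = b"
    by (rule bij_betw_inv_into_right[OF bij])
  have into: "\<And>p q a. a \<in> A p q \<Longrightarrow> f p q a \<in> B p q"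
    by (rule bij_betw_apply[OF bij])
  have into': "\<And>p q b. b \<in> B p q \<Longrightarrow> ?g p q b \<in> A p q"
    by (rule bij_betw_apply[OF bij_betw_inv_into[OF bij]])
  have "bij_betw F ?SA ?SB"
  proof (rule bij_betw_byWitness[where f'=G])
    show "\<forall>a\<in>?SA. G (F a) = a" using inv unfolding F_def G_def by auto
    show "\<forall>b\<in>?SB. F (G b) = b" using inv' unfolding F_def G_def by auto
    show "F ` ?SA \<subseteq> ?SB" using into XY unfolding F_def by auto
    show "G ` ?SB \<subseteq> ?SA"
    proof (rule image_subsetI)
      fix z assume "z \<in> ?SB"
      then obtain p u v q where z: "z = (p, u, v, q)" and uv: "(u, v) \<in> B p q" "Y p u v q" by auto
      let ?a = "?g p q (u, v)"
      have "?a \<in> A p q" using into' uv(1) .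
      moreover have "X p (fst ?a) (snd ?a) q"
        using XY[of "fst ?a" "snd ?a" p q] inv'[OF uv(1)] uv(2) calculation by simp
      ultimately show "G z \<in> ?SA" unfolding G_def z by simp
    qed
  qed
  then show ?thesis by (rule bij_betw_same_card)
qed

(* Switching with a fixed sentinel h appended to the upper row: the upper row u (length m)
   together with h shares all m+1 columns with the lower row v (length n). *)
definition capped_crossing :: "nat \<Rightarrow> nat \<Rightarrow> nat \<Rightarrow> (nat list \<times> nat list) set" where
  "capped_crossing h m n = {(u, v). sorted (u @ [h]) \<and> length u = m \<and> sorted v \<and> length v = n \<and>
     \<not> col_strict (m+1) (u @ [h]) v}"

definition capped_pairs :: "nat \<Rightarrow> nat \<Rightarrow> nat \<Rightarrow> (nat list \<times> nat list) set" where
  "capped_pairs h m n = {(P, Q). sorted (P @ [h]) \<and> length P = n \<and> sorted Q \<and> length Q = m}"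

definition capped_switch :: "nat \<Rightarrow> nat \<Rightarrow> nat \<Rightarrow> nat list \<times> nat list \<Rightarrow> nat list \<times> nat list" where
  "capped_switch h m n = (\<lambda>(u, v). let r = switch (m+1) (n-(m+1)) (u @ [h], v) in (butlast (fst r), snd r))"

definition capped_unswitch :: "nat \<Rightarrow> nat \<Rightarrow> nat \<Rightarrow> nat list \<times> nat list \<Rightarrow> nat list \<times> nat list" where
  "capped_unswitch h m n = (\<lambda>(P, Q). let r = unswitch (n-(m+1)) (P @ [h], Q) in (butlast (fst r), snd r))"

(* Since switching keeps the last entry of the upper row, the sentinel stays in place. *)
lemma capped_switch_props:
  assumes "m+1 \<le> n" "(u, v) \<in> capped_crossing h m n"
  defines "PQ \<equiv> capped_switch h m n (u, v)"
  shows "PQ \<in> capped_pairs h m n" "capped_unswitch h m n PQ = (u, v)"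
    "mset (fst PQ) + mset (snd PQ) = mset u + mset v" "hd (fst PQ) = hd v"
proof -
  have inA: "(u @ [h], v) \<in> crossing_pairs (m+1) n (m+1)"
    using assms(2) unfolding capped_crossing_def crossing_pairs_def by auto
  have y: "1 \<le> m+1" "m+1 \<le> m+1" by simp_all
  obtain P' Q' where sw: "switch (m+1) (n-(m+1)) (u @ [h], v) = (P', Q')" by force
  note props = switch_props[OF y assms(1) inA, unfolded sw]
  have lP': "length P' = n+1" "sorted P'" "sorted Q'" "length Q' = m"
    using props(1) assms(1) unfolding sorted_pairs_def by auto
  have "last P' = h" using props(3) by simp
  moreover have "P' \<noteq> []" using lP' by auto
  ultimately have P'eq: "P' = butlast P' @ [h]" by (metis append_butlast_last_id)
  have PQ: "PQ = (butlast P', Q')" unfolding PQ_def capped_switch_def using sw by simp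
  show "capped_unswitch h m n PQ = (u, v)"
    using PQ unswitch_switch[OF y assms(1) inA] sw P'eq[symmetric]
    unfolding capped_unswitch_def by (simp add: Let_def)
  from lP'(2) have "sorted (butlast P' @ [h])" by (subst (asm) P'eq)
  then show "PQ \<in> capped_pairs h m n" using PQ lP' unfolding capped_pairs_def by simp
  have "mset P' = mset (butlast P') + {#h#}" by (subst P'eq) simp
  then show "mset (fst PQ) + mset (snd PQ) = mset u + mset v" using props(2) PQ by simp
  have "butlast P' \<noteq> []" using lP' assms(1) by (cases P' rule: rev_cases) auto
  then show "hd (fst PQ) = hd v" using props(4) PQ by (subst (asm) P'eq) simp
qed

lemma capped_unswitch_props:
  assumes "m+1 \<le> n" "(P, Q) \<in> capped_pairs h m n"
  shows "capped_unswitch h m n (P, Q) \<in> capped_crossing h m n"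
    "capped_switch h m n (capped_unswitch h m n (P, Q)) = (P, Q)"
proof -
  have inB: "(P @ [h], Q) \<in> sorted_pairs ((m+1)+n-(m+1)+1) ((m+1)-1)"
    using assms(2) unfolding capped_pairs_def sorted_pairs_def by auto
  have y: "1 \<le> m+1" "m+1 \<le> m+1" by simp_all
  obtain U V where us: "unswitch (n-(m+1)) (P @ [h], Q) = (U, V)" by force
  have inA: "(U, V) \<in> crossing_pairs (m+1) n (m+1)"
    and sw: "switch (m+1) (n-(m+1)) (U, V) = (P @ [h], Q)"
    using unswitch_props[OF y assms(1) inB] us by auto
  have "last U = h" using switch_props(3)[OF y assms(1) inA] sw by simp
  moreover have lU: "length U = m+1" "sorted U" "sorted V" "length V = n" "\<not> col_strict (m+1) U V"
    using inA unfolding crossing_pairs_def by auto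
  moreover have "U \<noteq> []" using lU by auto
  ultimately have Ueq: "U = butlast U @ [h]" by (metis append_butlast_last_id)
  have us': "capped_unswitch h m n (P, Q) = (butlast U, V)" unfolding capped_unswitch_def using us by simp
  from lU(2) have "sorted (butlast U @ [h])" by (subst (asm) Ueq)
  moreover from lU(5) have "\<not> col_strict (m+1) (butlast U @ [h]) V" by (subst (asm) Ueq)
  ultimately show "capped_unswitch h m n (P, Q) \<in> capped_crossing h m n"
    using us' lU unfolding capped_crossing_def by simp
  show "capped_switch h m n (capped_unswitch h m n (P, Q)) = (P, Q)"
    using us' sw Ueq[symmetric] unfolding capped_switch_def by (simp add: Let_def)
qed

lemma capped_switch_bij:
  "m+1 \<le> n \<Longrightarrow> bij_betw (capped_switch h m n) (capped_crossing h m n) (capped_pairs h m n)"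
  by (rule bij_betw_byWitness[where f'="capped_unswitch h m n"])
    (auto simp: capped_switch_props capped_unswitch_props)

(* Switching with a fixed sentinel t put in front of the lower row: the upper row u
   (length m+1) shares all n columns with t # v, where v has length n-1. *)
definition headed_crossing :: "nat \<Rightarrow> nat \<Rightarrow> nat \<Rightarrow> (nat list \<times> nat list) set" where
  "headed_crossing t m n = {(u, v). sorted u \<and> length u = m+1 \<and> sorted (t # v) \<and> length v = n-1 \<and>
     \<not> col_strict n u (t # v)}"

definition headed_pairs :: "nat \<Rightarrow> nat \<Rightarrow> nat \<Rightarrow> (nat list \<times> nat list) set" where
  "headed_pairs t m n = {(P, Q). sorted (t # P) \<and> length P = m+1 \<and> sorted Q \<and> length Q = n-1}"

definition headed_switch :: "nat \<Rightarrow> nat \<Rightarrow> nat \<Rightarrow> nat list \<times> nat list \<Rightarrow> nat list \<times> nat list" where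
  "headed_switch t m n = (\<lambda>(u, v). let r = switch n 0 (u, t # v) in (tl (fst r), snd r))"

definition headed_unswitch :: "nat \<Rightarrow> nat \<Rightarrow> nat \<Rightarrow> nat list \<times> nat list \<Rightarrow> nat list \<times> nat list" where
  "headed_unswitch t m n = (\<lambda>(P, Q). let r = unswitch 0 (t # P, Q) in (fst r, tl (snd r)))"

(* Since switching moves the first entry of the lower row to the front of the upper row,
   the sentinel t ends up in front of the new upper row. *)
lemma headed_switch_props:
  assumes "1 \<le> n" "n \<le> m+1" "(u, v) \<in> headed_crossing t m n"
  defines "PQ \<equiv> headed_switch t m n (u, v)"
  shows "PQ \<in> headed_pairs t m n" "headed_unswitch t m n PQ = (u, v)"
    "mset (fst PQ) + mset (snd PQ) = mset u + mset v" "last (fst PQ) = last u"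
proof -
  have inA: "(u, t # v) \<in> crossing_pairs (m+1) n n"
    using assms unfolding headed_crossing_def crossing_pairs_def by auto
  obtain P' Q' where sw: "switch n (n-n) (u, t # v) = (P', Q')" by force
  note props = switch_props[of n "m+1" n u "t # v", OF assms(1,2) order.refl inA, unfolded sw]
  have lP': "length P' = m+2" "sorted P'" "sorted Q'" "length Q' = n-1"
    using props(1) unfolding sorted_pairs_def by auto
  have P'eq: "P' = t # tl P'" using props(4) lP' by (cases P') auto
  have PQ: "PQ = (tl P', Q')" unfolding PQ_def headed_switch_def using sw by simp
  show "headed_unswitch t m n PQ = (u, v)"
    using PQ unswitch_switch[of n "m+1" n u "t # v", OF assms(1,2) order.refl inA] sw P'eq[symmetric]
    unfolding headed_unswitch_def by (simp add: Let_def)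
  from lP'(2) have "sorted (t # tl P')" by (subst (asm) P'eq)
  then show "PQ \<in> headed_pairs t m n" using PQ lP' unfolding headed_pairs_def by simp
  have "mset P' = mset (tl P') + {#t#}" by (subst P'eq) simp
  then show "mset (fst PQ) + mset (snd PQ) = mset u + mset v" using props(2) PQ by simp
  have "tl P' \<noteq> []" using lP' by (cases P') auto
  then show "last (fst PQ) = last u" using props(3) PQ by (subst (asm) P'eq) simp
qed

lemma headed_unswitch_props:
  assumes "1 \<le> n" "n \<le> m+1" "(P, Q) \<in> headed_pairs t m n"
  shows "headed_unswitch t m n (P, Q) \<in> headed_crossing t m n"
    "headed_switch t m n (headed_unswitch t m n (P, Q)) = (P, Q)"
proof -
  have inB: "(t # P, Q) \<in> sorted_pairs ((m+1)+n-n+1) (n-1)"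
    using assms unfolding headed_pairs_def sorted_pairs_def by auto
  obtain U V where us: "unswitch (n-n) (t # P, Q) = (U, V)" by force
  have inA: "(U, V) \<in> crossing_pairs (m+1) n n" and sw: "switch n (n-n) (U, V) = (t # P, Q)"
    using unswitch_props[of n "m+1" n "t # P" Q, OF assms(1,2) order.refl inB] us by auto
  have "hd V = t" using switch_props(4)[of n "m+1" n U V, OF assms(1,2) order.refl inA] sw by simp
  moreover have lV: "length V = n" "sorted U" "sorted V" "length U = m+1" "\<not> col_strict n U V"
    using inA unfolding crossing_pairs_def by auto
  ultimately have Veq: "V = t # tl V" using assms(1) by (cases V) auto
  have us': "headed_unswitch t m n (P, Q) = (U, tl V)" unfolding headed_unswitch_def using us by simp
  from lV(3) have "sorted (t # tl V)" by (subst (asm) Veq)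
  moreover from lV(5) have "\<not> col_strict n U (t # tl V)" by (subst (asm) Veq)
  ultimately show "headed_unswitch t m n (P, Q) \<in> headed_crossing t m n"
    using us' lV unfolding headed_crossing_def by simp
  show "headed_switch t m n (headed_unswitch t m n (P, Q)) = (P, Q)"
    using us' sw Veq[symmetric] unfolding headed_switch_def by (simp add: Let_def)
qed

lemma headed_switch_bij:
  "1 \<le> n \<Longrightarrow> n \<le> m+1 \<Longrightarrow> bij_betw (headed_switch t m n) (headed_crossing t m n) (headed_pairs t m n)"
  by (rule bij_betw_byWitness[where f'="headed_unswitch t m n"])
    (auto simp: headed_switch_props headed_unswitch_props)

definition row_filling :: "nat list \<Rightarrow> nat list \<Rightarrow> nat list list \<Rightarrow> bool" where
  "row_filling \<alpha> \<beta> ws \<longleftrightarrow> length ws = length \<alpha> \<and> (\<forall>i<length \<alpha>. row_ok (\<alpha>!i) (ws!i)) \<and>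
     (\<forall>i. Suc i < length \<alpha> \<longrightarrow> col_strict (\<beta>!i) (ws!i) (ws!Suc i))"

definition overlap_shape :: "nat list \<Rightarrow> nat list \<Rightarrow> bool" where
  "overlap_shape \<alpha> \<beta> \<longleftrightarrow> \<alpha> \<noteq> [] \<and> length \<beta> + 1 = length \<alpha> \<and>
     (\<forall>i. Suc i < length \<alpha> \<longrightarrow> \<beta>!i \<le> \<alpha>!i \<and> \<beta>!i \<le> \<alpha>!Suc i)"

definition row_content :: "nat list list \<Rightarrow> nat \<Rightarrow> nat" where
  "row_content ws = count (mset (concat ws))"

definition tableau_of :: "nat list \<Rightarrow> nat list \<Rightarrow> nat list list \<Rightarrow> nat \<times> nat \<Rightarrow> nat" where
  "tableau_of lam mu ws = (\<lambda>(i,j). if i < length lam \<and> mu!i < j \<and> j \<le> lam!i then ws!i!(j - Suc (mu!i)) else 0)"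

definition rows_of :: "nat list \<Rightarrow> nat list \<Rightarrow> (nat \<times> nat \<Rightarrow> nat) \<Rightarrow> nat list list" where
  "rows_of \<alpha> mu T = map (\<lambda>i. map (\<lambda>k. T (i, Suc (mu!i) + k)) [0..<\<alpha>!i]) [0..<length \<alpha>]"

lemma count_concat: "count (mset (concat ws)) k = (\<Sum>i<length ws. count (mset (ws!i)) k)"
  by (induction ws) (simp_all add: sum.lessThan_Suc_shift del: sum.lessThan_Suc)

lemma count_mset_card: "count (mset xs) k = card {p. p < length xs \<and> xs!p = k}"
  by (simp add: count_mset count_list_eq_length_filter length_filter_conv_card eq_commute)

(* The coordinates of a skew diagram lambda/mu presented in overlap form: row i starts after
   column mu_i and has alpha_i boxes; rows i and i+1 share beta_i columns; and lambda, mu are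
   weakly decreasing, as for partitions. *)
locale skew_coords =
  fixes \<alpha> \<beta> lam mu :: "nat list"
  assumes len: "length lam = length \<alpha>" "length mu = length \<alpha>"
    and lam_eq: "\<And>i. i < length \<alpha> \<Longrightarrow> lam!i = mu!i + \<alpha>!i"
    and mu_Suc: "\<And>i. Suc i < length \<alpha> \<Longrightarrow> mu!Suc i + \<alpha>!Suc i = mu!i + \<beta>!i"
    and bet: "\<And>i. Suc i < length \<alpha> \<Longrightarrow> \<beta>!i \<le> \<alpha>!i \<and> \<beta>!i \<le> \<alpha>!Suc i"
    and mono: "\<And>i j. i \<le> j \<Longrightarrow> j < length \<alpha> \<Longrightarrow> mu!j \<le> mu!i \<and> lam!j \<le> lam!i"
begin

abbreviation "L \<equiv> length \<alpha>"

lemma box_iff: "(i,j) \<in> skew_boxes lam mu \<longleftrightarrow> i < L \<and> mu!i < j \<and> j \<le> lam!i"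
  unfolding skew_boxes_def using len by simp

lemma tableau_of_box: "(i,j) \<in> skew_boxes lam mu \<Longrightarrow> tableau_of lam mu ws (i,j) = ws!i!(j - Suc (mu!i))"
  unfolding tableau_of_def using box_iff len by simp

(* Column strictness between adjacent rows of a row filling becomes strictness down the
   columns of the tableau, first for adjacent rows and then, as lambda and mu are
   weakly decreasing, for any two rows. *)
lemma tableau_of_adjacent:
  assumes W: "row_filling \<alpha> \<beta> ws" and b1: "(i,j) \<in> skew_boxes lam mu" and b2: "(Suc i,j) \<in> skew_boxes lam mu"
  shows "tableau_of lam mu ws (i,j) < tableau_of lam mu ws (Suc i,j)"
proof -
  have i: "Suc i < L" "mu!i < j" "j \<le> lam!i" using b1 b2 box_iff by auto
  have j2: "mu!Suc i < j" "j \<le> lam!Suc i" using b2 box_iff by auto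
  have e1: "lam!Suc i = mu!Suc i + \<alpha>!Suc i" using lam_eq i by simp
  have e2: "mu!Suc i + \<alpha>!Suc i = mu!i + \<beta>!i" using mu_Suc i by simp
  have bb: "\<beta>!i \<le> \<alpha>!i \<and> \<beta>!i \<le> \<alpha>!Suc i" using bet i by simp
  define k where "k = j - Suc (mu!i)"
  have kb: "k < \<beta>!i" using i j2 e1 e2 k_def by linarith
  have r: "col_strict (\<beta>!i) (ws!i) (ws!Suc i)" using W i unfolding row_filling_def by simp
  have lw: "length (ws!Suc i) = \<alpha>!Suc i" using W i unfolding row_filling_def row_ok_def by simp
  have "ws!i!k < ws!Suc i!(k + \<alpha>!Suc i - \<beta>!i)" using r kb lw unfolding col_strict_def by simp
  moreover have "k + \<alpha>!Suc i - \<beta>!i = j - Suc (mu!Suc i)" using k_def i j2 e2 bb by linarith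
  ultimately show ?thesis using tableau_of_box[OF b1] tableau_of_box[OF b2] k_def by simp
qed

lemma tableau_of_column:
  assumes W: "row_filling \<alpha> \<beta> ws"
  shows "(i,j) \<in> skew_boxes lam mu \<Longrightarrow> (i+d+1,j) \<in> skew_boxes lam mu \<Longrightarrow>
         tableau_of lam mu ws (i,j) < tableau_of lam mu ws (i+d+1,j)"
proof (induction d arbitrary: i)
  case 0
  then show ?case using tableau_of_adjacent[OF W] by simp
next
  case (Suc d)
  have a: "i+Suc d+1 < L" "mu!(i+Suc d+1) < j" "j \<le> lam!(i+Suc d+1)" using Suc.prems box_iff by auto
  have b: "mu!i < j" using Suc.prems box_iff by auto
  have "mu!(Suc i) \<le> mu!i" "lam!(i+Suc d+1) \<le> lam!(Suc i)" using mono[of i "Suc i"] mono[of "Suc i" "i+Suc d+1"] a by auto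
  then have bx: "(Suc i, j) \<in> skew_boxes lam mu" using a b box_iff by auto
  have "tableau_of lam mu ws (i,j) < tableau_of lam mu ws (Suc i,j)" using tableau_of_adjacent[OF W Suc.prems(1) bx] .
  also have "\<dots> < tableau_of lam mu ws (Suc i + d + 1, j)" using Suc.IH[OF bx] Suc.prems(2) by simp
  finally show ?case by simp
qed

lemma tableau_of_ssyt:
  assumes W: "row_filling \<alpha> \<beta> ws"
  shows "ssyt lam mu (tableau_of lam mu ws)"
  unfolding ssyt_def
proof (intro conjI allI ballI impI)
  fix b assume "b \<notin> skew_boxes lam mu"
  then show "tableau_of lam mu ws b = 0" unfolding tableau_of_def skew_boxes_def by (cases b) auto
next
  fix b assume bb: "b \<in> skew_boxes lam mu"
  obtain i j where b: "b = (i,j)" by force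
  have i: "i < L" "mu!i < j" "j \<le> lam!i" using bb b box_iff by auto
  have "j - Suc (mu!i) < \<alpha>!i" using i lam_eq by simp
  moreover have "row_ok (\<alpha>!i) (ws!i)" using W i unfolding row_filling_def by simp
  ultimately have "ws!i!(j - Suc (mu!i)) \<in> set (ws!i)" "\<forall>v\<in>set (ws!i). 0 < v" unfolding row_ok_def by auto
  then show "1 \<le> tableau_of lam mu ws b" using tableau_of_box bb b by fastforce
next
  fix i j j' assume a: "(i,j) \<in> skew_boxes lam mu \<and> (i,j') \<in> skew_boxes lam mu \<and> j < j'"
  have i: "i < L" "mu!i < j" "j' \<le> lam!i" using a box_iff by auto
  have r: "row_ok (\<alpha>!i) (ws!i)" using W i unfolding row_filling_def by simp
  have ii: "j - Suc (mu!i) \<le> j' - Suc (mu!i)" "j' - Suc (mu!i) < length (ws!i)"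
    using r i a lam_eq[of i] unfolding row_ok_def by auto
  have "ws!i!(j - Suc (mu!i)) \<le> ws!i!(j' - Suc (mu!i))"
    using sorted_nth_mono[of "ws!i", OF _ ii] r unfolding row_ok_def by simp
  then show "tableau_of lam mu ws (i,j) \<le> tableau_of lam mu ws (i,j')" using tableau_of_box a by simp
next
  fix i i' j assume a: "(i,j) \<in> skew_boxes lam mu \<and> (i',j) \<in> skew_boxes lam mu \<and> i < i'"
  then obtain d where "i' = i + d + 1" by (metis add.commute add_Suc less_iff_Suc_add plus_1_eq_Suc)
  then show "tableau_of lam mu ws (i,j) < tableau_of lam mu ws (i',j)" using tableau_of_column[OF W] a by simp
qed

lemma tableau_of_level_set:
  "{b \<in> skew_boxes lam mu. tableau_of lam mu ws b = k} =
    (\<Union>i<L. (\<lambda>p. (i, Suc (mu!i) + p)) ` {p. p < \<alpha>!i \<and> ws!i!p = k})"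
  (is "?B = (\<Union>i<L. ?S i)")
proof
  show "?B \<subseteq> (\<Union>i<L. ?S i)"
  proof
    fix b assume bb: "b \<in> ?B"
    obtain i j where b: "b = (i,j)" by force
    have i: "i < L" "mu!i < j" "j \<le> lam!i" using bb b box_iff by auto
    have "ws!i!(j - Suc (mu!i)) = k" using bb b tableau_of_box by auto
    moreover have "j - Suc (mu!i) < \<alpha>!i" using i lam_eq by simp
    moreover have "j = Suc (mu!i) + (j - Suc (mu!i))" using i by simp
    ultimately have "b \<in> ?S i" unfolding b by blast
    then show "b \<in> (\<Union>i<L. ?S i)" using i by blast
  qed
  show "(\<Union>i<L. ?S i) \<subseteq> ?B"
  proof
    fix b assume "b \<in> (\<Union>i<L. ?S i)"
    then obtain i p where ip: "i < L" "p < \<alpha>!i" "ws!i!p = k" "b = (i, Suc (mu!i) + p)" by blast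
    have "b \<in> skew_boxes lam mu" using ip box_iff lam_eq by simp
    then show "b \<in> ?B" using tableau_of_box[of i "Suc (mu!i) + p"] ip by simp
  qed
qed

lemma tableau_of_content:
  assumes W: "row_filling \<alpha> \<beta> ws"
  shows "content lam mu (tableau_of lam mu ws) k = row_content ws k"
proof -
  define S where "S i = (\<lambda>p. (i, Suc (mu!i) + p)) ` {p. p < \<alpha>!i \<and> ws!i!p = k}" for i
  have cS: "card (S i) = count (mset (ws!i)) k" if "i < L" for i
  proof -
    have "card (S i) = card {p. p < \<alpha>!i \<and> ws!i!p = k}" unfolding S_def by (rule card_image) (simp add: inj_on_def)
    moreover have "length (ws!i) = \<alpha>!i" using W that unfolding row_filling_def row_ok_def by simp
    ultimately show ?thesis by (simp add: count_mset_card)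
  qed
  have "content lam mu (tableau_of lam mu ws) k = card (\<Union>i<L. S i)"
    unfolding content_def tableau_of_level_set S_def ..
  also have "\<dots> = (\<Sum>i<L. card (S i))"
    by (rule card_UN_disjoint) (auto simp: S_def)
  also have "\<dots> = (\<Sum>i<L. count (mset (ws!i)) k)" using cS by simp
  also have "\<dots> = row_content ws k" unfolding row_content_def count_concat using W unfolding row_filling_def by simp
  finally show ?thesis .
qed

lemma rows_of_tableau_of:
  assumes W: "row_filling \<alpha> \<beta> ws"
  shows "rows_of \<alpha> mu (tableau_of lam mu ws) = ws"
proof (rule nth_equalityI)
  show "length (rows_of \<alpha> mu (tableau_of lam mu ws)) = length ws" using W unfolding rows_of_def row_filling_def by simp
  fix i assume "i < length (rows_of \<alpha> mu (tableau_of lam mu ws))"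
  then have i: "i < L" unfolding rows_of_def by simp
  have lw: "length (ws!i) = \<alpha>!i" using W i unfolding row_filling_def row_ok_def by simp
  show "rows_of \<alpha> mu (tableau_of lam mu ws) ! i = ws ! i"
  proof (rule nth_equalityI)
    show "length (rows_of \<alpha> mu (tableau_of lam mu ws) ! i) = length (ws!i)" using i lw unfolding rows_of_def by simp
    fix p assume "p < length (rows_of \<alpha> mu (tableau_of lam mu ws) ! i)"
    then have p: "p < \<alpha>!i" using i unfolding rows_of_def by simp
    have "(i, Suc (mu!i) + p) \<in> skew_boxes lam mu" using i p box_iff lam_eq by simp
    then show "rows_of \<alpha> mu (tableau_of lam mu ws) ! i ! p = ws!i!p" using i p unfolding rows_of_def
      by (simp add: tableau_of_box)
  qed
qed

lemma rows_of_nth: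
  "i < L \<Longrightarrow> p < \<alpha>!i \<Longrightarrow> rows_of \<alpha> mu T ! i ! p = T (i, Suc (mu!i) + p)"
  "i < L \<Longrightarrow> length (rows_of \<alpha> mu T ! i) = \<alpha>!i"
  "i < L \<Longrightarrow> p < \<alpha>!i \<Longrightarrow> (i, Suc (mu!i) + p) \<in> skew_boxes lam mu"
  unfolding rows_of_def using box_iff lam_eq by simp_all

lemma rows_of_row_ok:
  assumes T: "ssyt lam mu T" and i: "i < L"
  shows "row_ok (\<alpha>!i) (rows_of \<alpha> mu T ! i)"
  unfolding row_ok_def
proof (intro conjI)
  let ?w = "rows_of \<alpha> mu T ! i"
  have p: "\<And>b. b \<in> skew_boxes lam mu \<Longrightarrow> 1 \<le> T b"
    and r: "\<And>i j j'. (i,j) \<in> skew_boxes lam mu \<Longrightarrow> (i,j') \<in> skew_boxes lam mu \<Longrightarrow> j < j' \<Longrightarrow> T (i,j) \<le> T (i,j')"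
    using T unfolding ssyt_def by blast+
  show "length ?w = \<alpha>!i" using rows_of_nth(2)[OF i] .
  show "sorted ?w" unfolding sorted_iff_nth_mono
  proof (intro allI impI)
    fix a b assume "a \<le> b" "b < length ?w"
    then show "?w!a \<le> ?w!b"
      using rows_of_nth[OF i] r[of i "Suc (mu!i) + a" "Suc (mu!i) + b"] by (cases "a = b") auto
  qed
  show "\<forall>v\<in>set ?w. 0 < v"
  proof
    fix v assume "v \<in> set ?w"
    then obtain a where "a < length ?w" "v = ?w!a" by (auto simp: in_set_conv_nth)
    then show "0 < v" using rows_of_nth[OF i] p by fastforce
  qed
qed

lemma rows_of_col_strict:
  assumes T: "ssyt lam mu T" and i: "Suc i < L"
  shows "col_strict (\<beta>!i) (rows_of \<alpha> mu T ! i) (rows_of \<alpha> mu T ! Suc i)"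
  unfolding col_strict_def
proof (intro allI impI)
  let ?U = "rows_of \<alpha> mu T"
  have c: "\<And>i i' j. (i,j) \<in> skew_boxes lam mu \<Longrightarrow> (i',j) \<in> skew_boxes lam mu \<Longrightarrow> i < i' \<Longrightarrow> T (i,j) < T (i',j)"
    using T unfolding ssyt_def by blast+
  fix k assume k: "k < \<beta>!i"
  have bb: "\<beta>!i \<le> \<alpha>!i \<and> \<beta>!i \<le> \<alpha>!Suc i" using bet i by simp
  have e2: "mu!Suc i + \<alpha>!Suc i = mu!i + \<beta>!i" using mu_Suc i by simp
  have lU: "length (?U!Suc i) = \<alpha>!Suc i" using rows_of_nth(2) i by simp
  have idx: "k + length (?U!Suc i) - \<beta>!i < \<alpha>!Suc i" using lU k bb by arith
  have idx2: "Suc (mu!Suc i) + (k + length (?U!Suc i) - \<beta>!i) = Suc (mu!i) + k"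
    using lU k bb e2 by simp
  have b1: "(i, Suc (mu!i) + k) \<in> skew_boxes lam mu" using rows_of_nth(3)[of i k] i k bb by simp
  have b2: "(Suc i, Suc (mu!i) + k) \<in> skew_boxes lam mu" using rows_of_nth(3)[OF i idx] idx2 by simp
  show "?U!i!k < ?U!Suc i!(k + length (?U!Suc i) - \<beta>!i)"
    using rows_of_nth(1)[of i k] rows_of_nth(1)[OF i idx] idx2 c[OF b1 b2] i k bb by simp
qed

lemma rows_of_row_filling:
  assumes T: "ssyt lam mu T"
  shows "row_filling \<alpha> \<beta> (rows_of \<alpha> mu T)"
  unfolding row_filling_def using rows_of_row_ok[OF T] rows_of_col_strict[OF T]
  by (simp add: rows_of_def)

lemma tableau_of_rows_of:
  assumes T: "ssyt lam mu T"
  shows "tableau_of lam mu (rows_of \<alpha> mu T) = T"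
proof (rule ext)
  fix b :: "nat \<times> nat"
  obtain i j where b: "b = (i,j)" by force
  show "tableau_of lam mu (rows_of \<alpha> mu T) b = T b"
  proof (cases "b \<in> skew_boxes lam mu")
    case True
    then have i: "i < L" "mu!i < j" "j \<le> lam!i" using b box_iff by auto
    have "j - Suc (mu!i) < \<alpha>!i" using i lam_eq by simp
    then show ?thesis using tableau_of_box True b i unfolding rows_of_def by simp
  next
    case False
    then show ?thesis using T b len unfolding tableau_of_def ssyt_def by (auto simp: box_iff)
  qed
qed

lemma card_row_fillings_eq: "card {ws. row_filling \<alpha> \<beta> ws \<and> row_content ws = c} = card {T. ssyt lam mu T \<and> content lam mu T = c}"
proof (rule bij_betw_same_card[of "tableau_of lam mu"], rule bij_betw_byWitness[where f'="rows_of \<alpha> mu"])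
  show "\<forall>a\<in>{ws. row_filling \<alpha> \<beta> ws \<and> row_content ws = c}. rows_of \<alpha> mu (tableau_of lam mu a) = a" using rows_of_tableau_of by auto
  show "\<forall>a'\<in>{T. ssyt lam mu T \<and> content lam mu T = c}. tableau_of lam mu (rows_of \<alpha> mu a') = a'"
    using tableau_of_rows_of by auto
  show "tableau_of lam mu ` {ws. row_filling \<alpha> \<beta> ws \<and> row_content ws = c} \<subseteq> {T. ssyt lam mu T \<and> content lam mu T = c}"
    using tableau_of_ssyt tableau_of_content by auto
  show "rows_of \<alpha> mu ` {T. ssyt lam mu T \<and> content lam mu T = c} \<subseteq> {ws. row_filling \<alpha> \<beta> ws \<and> row_content ws = c}"
  proof (rule image_subsetI)
    fix T assume "T \<in> {T. ssyt lam mu T \<and> content lam mu T = c}"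
    then have T: "ssyt lam mu T" "content lam mu T = c" by auto
    have W: "row_filling \<alpha> \<beta> (rows_of \<alpha> mu T)" and E: "tableau_of lam mu (rows_of \<alpha> mu T) = T"
      using rows_of_row_filling[OF T(1)] tableau_of_rows_of[OF T(1)] by auto
    have "row_content (rows_of \<alpha> mu T) = content lam mu T"
      using tableau_of_content[OF W] E by (auto simp: fun_eq_iff)
    then show "rows_of \<alpha> mu T \<in> {ws. row_filling \<alpha> \<beta> ws \<and> row_content ws = c}" using W T by simp
  qed
qed

end

lemma ov_start_Suc: "ov_start \<alpha> \<beta> (Suc i) = ov_start \<alpha> \<beta> i + int (\<beta>!i) - int (\<alpha>!Suc i)"
  by (simp add: ov_start_def)

lemma ov_start_mono:
  assumes "overlap_shape \<alpha> \<beta>"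
  shows "i \<le> j \<Longrightarrow> j < length \<alpha> \<Longrightarrow> ov_start \<alpha> \<beta> j \<le> ov_start \<alpha> \<beta> i \<and>
           ov_start \<alpha> \<beta> j + int (\<alpha>!j) \<le> ov_start \<alpha> \<beta> i + int (\<alpha>!i)"
proof (induction j)
  case 0 then show ?case by simp
next
  case (Suc j)
  show ?case
  proof (cases "i = Suc j")
    case True then show ?thesis by simp
  next
    case False
    then have "i \<le> j" using Suc.prems by simp
    have IH: "ov_start \<alpha> \<beta> j \<le> ov_start \<alpha> \<beta> i \<and> ov_start \<alpha> \<beta> j + int (\<alpha>!j) \<le> ov_start \<alpha> \<beta> i + int (\<alpha>!i)"
      using Suc.IH \<open>i \<le> j\<close> Suc.prems by simp
    have b: "\<beta>!j \<le> \<alpha>!j \<and> \<beta>!j \<le> \<alpha>!Suc j" using assms Suc.prems unfolding overlap_shape_def by simp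
    show ?thesis using IH b ov_start_Suc[of \<alpha> \<beta> j] by simp
  qed
qed

lemma overlap_shape_coords:
  assumes V: "overlap_shape \<alpha> \<beta>"
  shows "skew_coords \<alpha> \<beta> (ov_lambda \<alpha> \<beta>) (ov_mu \<alpha> \<beta>)"
proof -
  define L where "L = length \<alpha>"
  define st where "st = ov_start \<alpha> \<beta>"
  define base where "base = st (L - 1)"
  have L: "0 < L" using V unfolding overlap_shape_def L_def by simp
  have ge: "\<And>i. i < L \<Longrightarrow> base \<le> st i" unfolding base_def st_def L_def
    using ov_start_mono[OF V] L L_def by auto
  have ge2: "\<And>i. i < L \<Longrightarrow> base \<le> st i + int (\<alpha>!i)" using ge by (meson add_increasing2 of_nat_0_le_iff)
  have lam: "\<And>i. i < L \<Longrightarrow> int (ov_lambda \<alpha> \<beta> ! i) = st i + int (\<alpha>!i) - base"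
    unfolding ov_lambda_def using ge2 unfolding st_def base_def L_def by auto
  have mu: "\<And>i. i < L \<Longrightarrow> int (ov_mu \<alpha> \<beta> ! i) = st i - base"
    unfolding ov_mu_def using ge unfolding st_def base_def L_def by auto
  show ?thesis
  proof
    show "length (ov_lambda \<alpha> \<beta>) = length \<alpha>" "length (ov_mu \<alpha> \<beta>) = length \<alpha>"
      unfolding ov_lambda_def ov_mu_def by simp_all
  next
    fix i assume "i < length \<alpha>"
    then show "ov_lambda \<alpha> \<beta> ! i = ov_mu \<alpha> \<beta> ! i + \<alpha> ! i" using lam mu L_def by force
  next
    fix i assume i: "Suc i < length \<alpha>"
    have "st (Suc i) = st i + int (\<beta>!i) - int (\<alpha>!Suc i)" unfolding st_def by (rule ov_start_Suc)
    then show "ov_mu \<alpha> \<beta> ! Suc i + \<alpha> ! Suc i = ov_mu \<alpha> \<beta> ! i + \<beta> ! i"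
      using mu[of i] mu[of "Suc i"] i L_def by simp
  next
    fix i assume "Suc i < length \<alpha>"
    then show "\<beta> ! i \<le> \<alpha> ! i \<and> \<beta> ! i \<le> \<alpha> ! Suc i" using V unfolding overlap_shape_def by simp
  next
    fix i j assume ij: "i \<le> j" "j < length \<alpha>"
    have "st j \<le> st i \<and> st j + int (\<alpha>!j) \<le> st i + int (\<alpha>!i)" unfolding st_def using ov_start_mono[OF V ij] .
    then show "ov_mu \<alpha> \<beta> ! j \<le> ov_mu \<alpha> \<beta> ! i \<and> ov_lambda \<alpha> \<beta> ! j \<le> ov_lambda \<alpha> \<beta> ! i"
      using lam[of i] lam[of j] mu[of i] mu[of j] ij L_def by simp
  qed
qed

lemma ov_schur_eq_card_fillings:
  assumes "overlap_shape \<alpha> \<beta>"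
  shows "ov_schur \<alpha> \<beta> c = int (card {ws. row_filling \<alpha> \<beta> ws \<and> row_content ws = c})"
proof -
  interpret skew_coords \<alpha> \<beta> "ov_lambda \<alpha> \<beta>" "ov_mu \<alpha> \<beta>" using overlap_shape_coords[OF assms] .
  show ?thesis unfolding ov_schur_def skew_schur_def using card_row_fillings_eq by simp
qed


lemma row_filling_length: "row_filling \<alpha> \<beta> ws \<Longrightarrow> length ws = length \<alpha>"
  unfolding row_filling_def by simp

lemma row_filling_Nil: "row_filling [] \<beta> ws \<longleftrightarrow> ws = []"
  unfolding row_filling_def by simp

lemma row_filling_Cons:
  assumes "length \<beta> = length \<alpha>" "length ws = length \<alpha>"
  shows "row_filling (a # \<alpha>) \<beta> (w # ws) \<longleftrightarrow>
    row_ok a w \<and> row_filling \<alpha> (tl \<beta>) ws \<and> (\<alpha> \<noteq> [] \<longrightarrow> col_strict (hd \<beta>) w (hd ws))"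
proof -
  have "(\<forall>i<length \<alpha>. col_strict (\<beta>!i) ((w # ws)!i) (ws!i)) \<longleftrightarrow>
      (\<alpha> \<noteq> [] \<longrightarrow> col_strict (hd \<beta>) w (hd ws)) \<and>
      (\<forall>i. Suc i < length \<alpha> \<longrightarrow> col_strict (tl \<beta>!i) (ws!i) (ws!Suc i))"
    using assms by (cases \<alpha>; cases \<beta>; cases ws) (auto simp: All_less_Suc2 nth_Cons' less_Suc_eq_0_disj)
  then show ?thesis using assms unfolding row_filling_def by (auto simp: All_less_Suc2)
qed

lemma row_filling_append:
  assumes "length ws1 = length \<alpha>1" "length \<beta>1 + 1 = length \<alpha>1"
    and "length ws2 = length \<alpha>2" "length \<beta>2 + 1 = length \<alpha>2"
  shows "row_filling (\<alpha>1 @ \<alpha>2) (\<beta>1 @ y # \<beta>2) (ws1 @ ws2) \<longleftrightarrow>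
    row_filling \<alpha>1 \<beta>1 ws1 \<and> row_filling \<alpha>2 \<beta>2 ws2 \<and> col_strict y (last ws1) (hd ws2)"
  using assms
proof (induction \<alpha>1 arbitrary: \<beta>1 ws1)
  case Nil
  then show ?case by simp
next
  case (Cons a \<alpha>1)
  obtain w ws1' where ws1: "ws1 = w # ws1'" using Cons.prems(1) by (cases ws1) auto
  have ne2: "\<alpha>2 \<noteq> []" "ws2 \<noteq> []" using Cons.prems by auto
  show ?case
  proof (cases "\<alpha>1 = []")
    case True
    then have "\<beta>1 = []" "ws1' = []" using Cons.prems ws1 by auto
    then show ?thesis using True ws1 ne2 Cons.prems by (simp add: row_filling_Cons row_filling_Nil)
  next
    case False
    obtain b \<beta>1' where \<beta>1: "\<beta>1 = b # \<beta>1'" using Cons.prems(2) False by (cases \<beta>1) auto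
    have ne1: "ws1' \<noteq> []" using False Cons.prems ws1 by auto
    have IH: "row_filling (\<alpha>1 @ \<alpha>2) (\<beta>1' @ y # \<beta>2) (ws1' @ ws2) \<longleftrightarrow>
        row_filling \<alpha>1 \<beta>1' ws1' \<and> row_filling \<alpha>2 \<beta>2 ws2 \<and> col_strict y (last ws1') (hd ws2)"
      using Cons.IH[of ws1' \<beta>1'] Cons.prems ws1 \<beta>1 by simp
    show ?thesis using IH Cons.prems ws1 \<beta>1 False ne1 by (auto simp: row_filling_Cons)
  qed
qed

lemma row_filling_snoc:
  assumes "length \<beta> = length \<alpha>" "length ws = length \<alpha>"
  shows "row_filling (\<alpha> @ [a]) \<beta> (ws @ [w]) \<longleftrightarrow>
    row_filling \<alpha> (butlast \<beta>) ws \<and> row_ok a w \<and> (\<alpha> \<noteq> [] \<longrightarrow> col_strict (last \<beta>) (last ws) w)"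
proof (cases "\<alpha> = []")
  case True
  then show ?thesis using assms by (simp add: row_filling_Cons row_filling_Nil)
next
  case False
  then have \<beta>: "\<beta> = butlast \<beta> @ [last \<beta>]" using assms by (metis append_butlast_last_id length_0_conv)
  have "row_filling (\<alpha> @ [a]) (butlast \<beta> @ [last \<beta>]) (ws @ [w]) \<longleftrightarrow>
      row_filling \<alpha> (butlast \<beta>) ws \<and> row_filling [a] [] [w] \<and> col_strict (last \<beta>) (last ws) w"
    using row_filling_append[of ws \<alpha> "butlast \<beta>" "[w]" "[a]" "[]" "last \<beta>"] assms False by simp
  then show ?thesis using \<beta> False by (simp add: row_filling_Cons row_filling_Nil)
qed

lemma row_filling_split:
  assumes "length \<sigma>b = length \<sigma>" "length \<tau>b = length \<tau>" "length ps = length \<sigma>" "length qs = length \<tau>"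
  shows "row_filling (\<sigma> @ [m', n'] @ \<tau>) (\<sigma>b @ [y] @ \<tau>b) (ps @ [u, v] @ qs) \<longleftrightarrow>
    row_filling \<sigma> (butlast \<sigma>b) ps \<and> row_filling \<tau> (tl \<tau>b) qs \<and> row_ok m' u \<and> row_ok n' v \<and>
    (\<sigma> \<noteq> [] \<longrightarrow> col_strict (last \<sigma>b) (last ps) u) \<and> col_strict y u v \<and>
    (\<tau> \<noteq> [] \<longrightarrow> col_strict (hd \<tau>b) v (hd qs))"
proof -
  have "row_filling ((\<sigma> @ [m']) @ (n' # \<tau>)) (\<sigma>b @ y # \<tau>b) ((ps @ [u]) @ (v # qs)) \<longleftrightarrow>
      row_filling (\<sigma> @ [m']) \<sigma>b (ps @ [u]) \<and> row_filling (n' # \<tau>) \<tau>b (v # qs) \<and> col_strict y u v"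
    using row_filling_append[of "ps @ [u]" "\<sigma> @ [m']" \<sigma>b "v # qs" "n' # \<tau>" \<tau>b y] assms by simp
  then show ?thesis using assms by (auto simp: row_filling_snoc row_filling_Cons)
qed

definition quad_content :: "nat list list \<Rightarrow> nat list \<Rightarrow> nat list \<Rightarrow> nat list list \<Rightarrow> nat multiset" where
  "quad_content ps u v qs = mset (concat ps) + mset u + mset v + mset (concat qs)"

lemma row_content_split: "row_content (ps @ [u, v] @ qs) = count (quad_content ps u v qs)"
  unfolding row_content_def quad_content_def by (simp add: ac_simps)

type_synonym quad = "nat list list \<times> nat list \<times> nat list \<times> nat list list"

definition split_fillings ::
  "nat list \<Rightarrow> nat list \<Rightarrow> nat \<Rightarrow> nat \<Rightarrow> nat \<Rightarrow> nat list \<Rightarrow> nat list \<Rightarrow> (nat \<Rightarrow> nat) \<Rightarrow> quad set" where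
  "split_fillings \<sigma> \<sigma>b m' n' y \<tau> \<tau>b c = {(ps, u, v, qs).
     row_filling \<sigma> (butlast \<sigma>b) ps \<and> row_filling \<tau> (tl \<tau>b) qs \<and> row_ok m' u \<and> row_ok n' v \<and>
     (\<sigma> \<noteq> [] \<longrightarrow> col_strict (last \<sigma>b) (last ps) u) \<and> col_strict y u v \<and>
     (\<tau> \<noteq> [] \<longrightarrow> col_strict (hd \<tau>b) v (hd qs)) \<and> count (quad_content ps u v qs) = c}"

lemma card_split_fillings:
  assumes "length \<sigma>b = length \<sigma>" "length \<tau>b = length \<tau>"
  shows "card {ws. row_filling (\<sigma> @ [m', n'] @ \<tau>) (\<sigma>b @ [y] @ \<tau>b) ws \<and> row_content ws = c} =
    card (split_fillings \<sigma> \<sigma>b m' n' y \<tau> \<tau>b c)"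
proof -
  let ?join = "\<lambda>(ps, u, v, qs). ps @ [u, v] @ qs :: nat list list"
  have inj: "inj_on ?join (split_fillings \<sigma> \<sigma>b m' n' y \<tau> \<tau>b c)"
  proof (rule inj_onI)
    fix a b assume a: "a \<in> split_fillings \<sigma> \<sigma>b m' n' y \<tau> \<tau>b c"
      and b: "b \<in> split_fillings \<sigma> \<sigma>b m' n' y \<tau> \<tau>b c" and e: "?join a = ?join b"
    obtain ps u v qs where a': "a = (ps, u, v, qs)" by (cases a) blast
    obtain ps' u' v' qs' where b': "b = (ps', u', v', qs')" by (cases b) blast
    have "length ps = length ps'" using a b a' b' unfolding split_fillings_def
      using row_filling_length by auto
    then show "a = b" using e a' b' by (simp add: append_eq_append_conv)
  qed
  have "{ws. row_filling (\<sigma> @ [m', n'] @ \<tau>) (\<sigma>b @ [y] @ \<tau>b) ws \<and> row_content ws = c} =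
      ?join ` split_fillings \<sigma> \<sigma>b m' n' y \<tau> \<tau>b c"
  proof (intro set_eqI iffI)
    fix ws assume "ws \<in> {ws. row_filling (\<sigma> @ [m', n'] @ \<tau>) (\<sigma>b @ [y] @ \<tau>b) ws \<and> row_content ws = c}"
    then have W: "row_filling (\<sigma> @ [m', n'] @ \<tau>) (\<sigma>b @ [y] @ \<tau>b) ws" and C: "row_content ws = c" by auto
    define s where "s = length \<sigma>"
    have lw: "length ws = s + 2 + length \<tau>" using row_filling_length[OF W] s_def by simp
    define ps where "ps = take s ws"
    define qs where "qs = drop (Suc (Suc s)) ws"
    have j: "ws = ps @ [ws!s, ws!Suc s] @ qs"
      unfolding ps_def qs_def using lw by (simp add: Cons_nth_drop_Suc numeral_2_eq_2)
    have l: "length ps = length \<sigma>" "length qs = length \<tau>" using lw unfolding ps_def qs_def s_def by auto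
    have "row_filling (\<sigma> @ [m', n'] @ \<tau>) (\<sigma>b @ [y] @ \<tau>b) (ps @ [ws!s, ws!Suc s] @ qs)"
      "count (quad_content ps (ws!s) (ws!Suc s) qs) = c"
      using W C row_content_split[of ps "ws!s" "ws!Suc s" qs] j by simp_all
    then have "(ps, ws!s, ws!Suc s, qs) \<in> split_fillings \<sigma> \<sigma>b m' n' y \<tau> \<tau>b c"
      using row_filling_split[OF assms l] unfolding split_fillings_def by simp
    then show "ws \<in> ?join ` split_fillings \<sigma> \<sigma>b m' n' y \<tau> \<tau>b c" using j by force
  next
    fix ws assume "ws \<in> ?join ` split_fillings \<sigma> \<sigma>b m' n' y \<tau> \<tau>b c"
    then obtain ps u v qs where ws: "ws = ps @ [u, v] @ qs"
      and z: "(ps, u, v, qs) \<in> split_fillings \<sigma> \<sigma>b m' n' y \<tau> \<tau>b c" by auto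
    then have "length ps = length \<sigma>" "length qs = length \<tau>"
      unfolding split_fillings_def using row_filling_length by auto
    then show "ws \<in> {ws. row_filling (\<sigma> @ [m', n'] @ \<tau>) (\<sigma>b @ [y] @ \<tau>b) ws \<and> row_content ws = c}"
      using row_filling_split[OF assms] z ws row_content_split unfolding split_fillings_def by auto
  qed
  then show ?thesis using card_image[OF inj] by simp
qed


lemma overlap_shape_split:
  assumes l: "length \<sigma>b = length \<sigma>" "length \<tau>b = length \<tau>"
    and Vs: "\<And>i. Suc i < length \<sigma> \<Longrightarrow> \<sigma>b!i \<le> \<sigma>!i \<and> \<sigma>b!i \<le> \<sigma>!Suc i"
    and Ls: "\<sigma> \<noteq> [] \<Longrightarrow> last \<sigma>b \<le> last \<sigma> \<and> last \<sigma>b \<le> m'"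
    and y: "y \<le> m'" "y \<le> n'"
    and Lt: "\<tau> \<noteq> [] \<Longrightarrow> hd \<tau>b \<le> n' \<and> hd \<tau>b \<le> hd \<tau>"
    and Vt: "\<And>i. 0 < i \<Longrightarrow> i < length \<tau> \<Longrightarrow> \<tau>b!i \<le> \<tau>!i \<and> \<tau>b!i \<le> \<tau>!(i-1)"
  shows "overlap_shape (\<sigma> @ [m', n'] @ \<tau>) (\<sigma>b @ [y] @ \<tau>b)"
proof -
  define s where "s = length \<sigma>"
  have A: "\<And>j. (\<sigma> @ [m', n'] @ \<tau>)!j =
      (if j < s then \<sigma>!j else if j = s then m' else if j = Suc s then n' else \<tau>!(j - s - 2))"
    unfolding s_def by (auto simp: nth_append nth_Cons' numeral_2_eq_2)
  have B: "\<And>j. (\<sigma>b @ [y] @ \<tau>b)!j = (if j < s then \<sigma>b!j else if j = s then y else \<tau>b!(j - s - 1))"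
    unfolding s_def using l by (auto simp: nth_append nth_Cons')
  have "(\<sigma>b @ [y] @ \<tau>b)!i \<le> (\<sigma> @ [m', n'] @ \<tau>)!i \<and> (\<sigma>b @ [y] @ \<tau>b)!i \<le> (\<sigma> @ [m', n'] @ \<tau>)!Suc i"
    if i: "Suc i < length (\<sigma> @ [m', n'] @ \<tau>)" for i
  proof -
    have it: "i < s + 1 + length \<tau>" using i s_def by simp
    consider "Suc i < s" | "Suc i = s" | "i = s" | "i = Suc s" | "Suc s < i" by linarith
    then show ?thesis
    proof cases
      case 1
      then show ?thesis using A B Vs s_def by simp
    next
      case 2
      then have ne: "\<sigma> \<noteq> []" "\<sigma>b \<noteq> []" and "i = length \<sigma> - 1" using s_def l by auto
      then have "last \<sigma>b = \<sigma>b!i" "last \<sigma> = \<sigma>!i" using l by (simp_all add: last_conv_nth)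
      then show ?thesis using A B Ls[OF ne(1)] 2 by simp
    next
      case 3
      then show ?thesis using A B y by simp
    next
      case 4
      then have ne: "\<tau> \<noteq> []" "\<tau>b \<noteq> []" using it l by auto
      then have "hd \<tau>b = \<tau>b!0" "hd \<tau> = \<tau>!0" by (auto simp: hd_conv_nth)
      then show ?thesis using A B Lt[OF ne(1)] 4 by simp
    next
      case 5
      define k where "k = i - s - 1"
      have k: "0 < k" "k < length \<tau>" "i - s - 2 = k - 1" "Suc i - s - 2 = k" using 5 it k_def by auto
      then show ?thesis using A B Vt[OF k(1,2)] 5 k_def by simp
    qed
  qed
  then show ?thesis unfolding overlap_shape_def using l by simp
qed

lemma ov_schur_split:
  assumes "overlap_shape (\<sigma> @ [m', n'] @ \<tau>) (\<sigma>b @ [y] @ \<tau>b)"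
    and "length \<sigma>b = length \<sigma>" "length \<tau>b = length \<tau>"
  shows "ov_schur (\<sigma> @ [m', n'] @ \<tau>) (\<sigma>b @ [y] @ \<tau>b) c = int (card (split_fillings \<sigma> \<sigma>b m' n' y \<tau> \<tau>b c))"
  using ov_schur_eq_card_fillings[OF assms(1)] card_split_fillings[OF assms(2,3)] by simp

definition positive :: "nat list \<Rightarrow> bool" where
  "positive w \<longleftrightarrow> (\<forall>x\<in>set w. 0 < x)"

lemma row_ok_iff: "row_ok k w \<longleftrightarrow> length w = k \<and> sorted w \<and> positive w"
  unfolding row_ok_def positive_def by simp

lemma positive_pair_mset:
  "mset u + mset v = mset P + mset Q \<Longrightarrow> (positive u \<and> positive v) = (positive P \<and> positive Q)"
  unfolding positive_def by (metis Un_iff set_mset_mset set_mset_union)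

lemma col_strict_1_last: "u \<noteq> [] \<Longrightarrow> col_strict 1 R u \<longleftrightarrow> R!0 < last u"
  unfolding col_strict_def by (simp add: last_conv_nth)

lemma col_strict_1_hd: "v \<noteq> [] \<Longrightarrow> col_strict 1 v T \<longleftrightarrow> hd v < T!(length T - 1)"
  unfolding col_strict_def by (simp add: hd_conv_nth)

lemma col_strict_cong_left: "(\<And>k. k < y \<Longrightarrow> A!k = B!k) \<Longrightarrow> col_strict y A V = col_strict y B V"
  unfolding col_strict_def by simp

lemma col_strict_cong_right:
  "(\<And>k. k < y \<Longrightarrow> V!(k + length V - y) = W!(k + length W - y)) \<Longrightarrow> col_strict y A V = col_strict y A W"
  unfolding col_strict_def by simp

lemma row_ok_append:
  assumes "length u = a" "u \<noteq> []" "R \<noteq> []"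
  shows "row_ok (a + b) (u @ R) \<longleftrightarrow> row_ok a u \<and> row_ok b R \<and> last u \<le> R!0"
proof -
  obtain r rs where "R = r # rs" using assms(3) by (cases R) auto
  then show ?thesis using assms unfolding row_ok_def by (auto simp: sorted_append_nonempty)
qed

lemma finite_sub_mset_lists: "finite {w :: 'a list. mset w \<subseteq># M}"
proof (rule finite_subset[OF _ finite_lists_length_le[of "set_mset M" "size M"]])
  show "{w. mset w \<subseteq># M} \<subseteq> {w. set w \<subseteq> set_mset M \<and> length w \<le> size M}"
    by (fastforce dest: mset_subset_eqD size_mset_mono)
qed simp

lemma finite_bounded_row_lists: "finite {ws :: 'a list list. mset (concat ws) \<subseteq># M \<and> length ws \<le> k}"
proof (rule finite_subset[OF _ finite_lists_length_le[OF finite_sub_mset_lists, of M k]])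
  have "mset w \<subseteq># mset (concat ws)" if "w \<in> set ws" for w :: "'a list" and ws
    using that by (induction ws) (auto intro: subset_mset.order_trans[OF _ mset_subset_eq_add_right])
  then show "{ws. mset (concat ws) \<subseteq># M \<and> length ws \<le> k} \<subseteq> {ws. set ws \<subseteq> {w. mset w \<subseteq># M} \<and> length ws \<le> k}"
    by (auto intro: subset_mset.order_trans)
qed


(* A cut filling is a quadruple (ps, u, v, qs) of the sigma rows, two middle rows
   and the tau rows; since last sigmab = hd taub = 1, the middle rows meet their outer
   neighbours in a single column. *)
locale standing =
  fixes \<sigma> \<tau> \<sigma>b \<tau>b :: "nat list" and c :: "nat \<Rightarrow> nat"
  assumes SH: "standing_hyp \<sigma> \<tau> \<sigma>b \<tau>b"
begin

lemma standing_facts: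
  shows pos_s: "\<And>a. a \<in> set \<sigma> \<Longrightarrow> 1 \<le> a" and pos_t: "\<And>a. a \<in> set \<tau> \<Longrightarrow> 1 \<le> a"
    and lsb: "length \<sigma>b = length \<sigma>" and ltb: "length \<tau>b = length \<tau>"
    and lastsb: "\<sigma> \<noteq> [] \<Longrightarrow> last \<sigma>b = 1" and hdtb: "\<tau> \<noteq> [] \<Longrightarrow> hd \<tau>b = 1"
    and Vs: "\<And>i. Suc i < length \<sigma> \<Longrightarrow> \<sigma>b!i \<le> \<sigma>!i \<and> \<sigma>b!i \<le> \<sigma>!Suc i"
    and Vt: "\<And>i. 0 < i \<Longrightarrow> i < length \<tau> \<Longrightarrow> \<tau>b!i \<le> \<tau>!i \<and> \<tau>b!i \<le> \<tau>!(i-1)"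
  using SH unfolding standing_hyp_def by auto

definition outer_ok :: "nat list list \<Rightarrow> nat list list \<Rightarrow> bool" where
  "outer_ok ps qs \<longleftrightarrow> row_filling \<sigma> (butlast \<sigma>b) ps \<and> row_filling \<tau> (tl \<tau>b) qs"

definition joins_above :: "nat list list \<Rightarrow> nat list \<Rightarrow> bool" where
  "joins_above ps u \<longleftrightarrow> (ps \<noteq> [] \<longrightarrow> col_strict 1 (last ps) u)"

definition joins_below :: "nat list \<Rightarrow> nat list list \<Rightarrow> bool" where
  "joins_below v qs \<longleftrightarrow> (qs \<noteq> [] \<longrightarrow> col_strict 1 v (hd qs))"

definition quads :: "(nat list list \<Rightarrow> nat list \<Rightarrow> nat list \<Rightarrow> nat list list \<Rightarrow> bool) \<Rightarrow> quad set" where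
  "quads P = {(ps, u, v, qs). outer_ok ps qs \<and> count (quad_content ps u v qs) = c \<and> P ps u v qs}"

lemma outer_ok_length: "outer_ok ps qs \<Longrightarrow> length ps = length \<sigma> \<and> length qs = length \<tau>"
  unfolding outer_ok_def using row_filling_length by blast

lemma outer_ok_nonempty: "outer_ok ps qs \<Longrightarrow> (ps \<noteq> [] \<longleftrightarrow> \<sigma> \<noteq> []) \<and> (qs \<noteq> [] \<longleftrightarrow> \<tau> \<noteq> [])"
  using outer_ok_length by fastforce

lemma quads_cong: "(\<And>ps u v qs. outer_ok ps qs \<Longrightarrow> P ps u v qs = P' ps u v qs) \<Longrightarrow> quads P = quads P'"
  unfolding quads_def by auto

(* All cut fillings of content c have the same multiset of entries, so there are finitely many. *)
lemma finite_quads: "finite (quads P)"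
proof (cases "quads (\<lambda>_ _ _ _. True) = {}")
  case True
  moreover have "quads P \<subseteq> quads (\<lambda>_ _ _ _. True)" unfolding quads_def by auto
  ultimately show ?thesis by (simp add: finite_subset)
next
  case False
  then obtain ps0 u0 v0 qs0 where z0: "(ps0, u0, v0, qs0) \<in> quads (\<lambda>_ _ _ _. True)" by auto
  define M where "M = quad_content ps0 u0 v0 qs0"
  define K where "K = length \<sigma> + length \<tau>"
  define Rs where "Rs = {ws :: nat list list. mset (concat ws) \<subseteq># M \<and> length ws \<le> K}"
  define Ws where "Ws = {w :: nat list. mset w \<subseteq># M}"
  have "quads P \<subseteq> Rs \<times> Ws \<times> Ws \<times> Rs"
  proof
    fix z assume "z \<in> quads P"
    moreover obtain ps u v qs where zz: "z = (ps, u, v, qs)" by (cases z) blast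
    ultimately have z: "(ps, u, v, qs) \<in> quads P" by simp
    then have "count (quad_content ps u v qs) = count M" using z0 unfolding quads_def M_def by simp
    then have M: "M = mset (concat ps) + mset u + mset v + mset (concat qs)"
      unfolding quad_content_def by (metis multiset_eqI)
    have l: "length ps \<le> K" "length qs \<le> K" using z outer_ok_length unfolding quads_def K_def by auto
    show "z \<in> Rs \<times> Ws \<times> Ws \<times> Rs"
      unfolding zz Rs_def Ws_def M using l by (simp add: subset_mset.add_increasing2 subset_mset.add_increasing)
  qed
  moreover have "finite Rs" "finite Ws"
    unfolding Rs_def Ws_def by (rule finite_bounded_row_lists, rule finite_sub_mset_lists)
  ultimately show ?thesis by (meson finite_SigmaI finite_subset)
qed

lemma card_quads_split:
  "card (quads P) = card (quads (\<lambda>a b d e. P a b d e \<and> Q a b d e)) + card (quads (\<lambda>a b d e. P a b d e \<and> \<not> Q a b d e))"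
proof -
  have "quads P = quads (\<lambda>a b d e. P a b d e \<and> Q a b d e) \<union> quads (\<lambda>a b d e. P a b d e \<and> \<not> Q a b d e)"
    unfolding quads_def by auto
  moreover have "quads (\<lambda>a b d e. P a b d e \<and> Q a b d e) \<inter> quads (\<lambda>a b d e. P a b d e \<and> \<not> Q a b d e) = {}"
    unfolding quads_def by auto
  ultimately show ?thesis using finite_quads by (simp add: card_Un_disjoint)
qed

lemma quad_content_eq: "mset u + mset v = mset u' + mset v' \<Longrightarrow> quad_content p u v q = quad_content p u' v' q"
  unfolding quad_content_def by (simp add: add.assoc)


definition middle :: "nat \<Rightarrow> nat \<Rightarrow> nat \<Rightarrow> quad set" where
  "middle m n x = quads (\<lambda>ps u v qs. row_ok m u \<and> row_ok n v \<and> joins_above ps u \<and> joins_below v qs \<and>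
     col_strict x u v)"

definition free_middle :: "nat \<Rightarrow> nat \<Rightarrow> quad set" where
  "free_middle m n = quads (\<lambda>ps u v qs. row_ok m u \<and> row_ok n v \<and> joins_above ps u \<and> joins_below v qs)"

definition detached :: "nat \<Rightarrow> nat \<Rightarrow> quad set" where
  "detached p q = quads (\<lambda>ps u v qs. row_ok p u \<and> row_ok q v \<and> joins_above ps u \<and> joins_below u qs)"

(* The coefficients on the left of the theorem, and those of A and B for x < m resp. x < n-1. *)
lemma ov_schur_middle:
  assumes "1 \<le> m'" "1 \<le> n'" "y \<le> m'" "y \<le> n'"
  shows "ov_schur (\<sigma> @ [m', n'] @ \<tau>) (\<sigma>b @ [y] @ \<tau>b) c = int (card (middle m' n' y))"
proof -
  have V: "overlap_shape (\<sigma> @ [m', n'] @ \<tau>) (\<sigma>b @ [y] @ \<tau>b)"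
  proof (rule overlap_shape_split[OF lsb ltb Vs _ assms(3,4) _ Vt])
    assume ne: "\<sigma> \<noteq> []"
    have "1 \<le> last \<sigma>" using pos_s ne by simp
    then show "last \<sigma>b \<le> last \<sigma> \<and> last \<sigma>b \<le> m'" using lastsb[OF ne] assms by simp
  next
    assume ne: "\<tau> \<noteq> []"
    have "1 \<le> hd \<tau>" using pos_t ne by simp
    then show "hd \<tau>b \<le> n' \<and> hd \<tau>b \<le> hd \<tau>" using hdtb[OF ne] assms by simp
  qed auto
  have "split_fillings \<sigma> \<sigma>b m' n' y \<tau> \<tau>b c = middle m' n' y"
    unfolding split_fillings_def middle_def quads_def joins_above_def joins_below_def
    using outer_ok_nonempty lastsb hdtb by (auto simp: outer_ok_def)
  then show ?thesis using ov_schur_split[OF V lsb ltb] by simp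
qed

(* Switching the middle rows at their first crossing (lemma switch_bij): pairs of middle rows
   that violate the overlap x correspond to detached configurations, the switched upper row
   keeping the first entry of v and the last entry of u, so that it inherits both
   attachments. *)
lemma card_crossing_middle:
  assumes x: "1 \<le> x" "x \<le> m" "x \<le> n"
  shows "card (quads (\<lambda>ps u v qs. row_ok m u \<and> row_ok n v \<and> joins_above ps u \<and> joins_below v qs \<and>
      \<not> col_strict x u v)) = card (detached (m+n-x+1) (x-1))"
proof -
  define X where "X p u v q \<longleftrightarrow> outer_ok p q \<and> count (quad_content p u v q) = c \<and>
    positive u \<and> positive v \<and> joins_above p u \<and> joins_below v q" for p u v q
  define Y where "Y p u v q \<longleftrightarrow> outer_ok p q \<and> count (quad_content p u v q) = c \<and>
    positive u \<and> positive v \<and> joins_above p u \<and> joins_below u q" for p u v q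
  have "quads (\<lambda>ps u v qs. row_ok m u \<and> row_ok n v \<and> joins_above ps u \<and> joins_below v qs \<and>
      \<not> col_strict x u v) = {(p, u, v, q). (u, v) \<in> crossing_pairs m n x \<and> X p u v q}"
    unfolding quads_def crossing_pairs_def X_def row_ok_iff by auto
  moreover have "detached (m+n-x+1) (x-1) = {(p, u, v, q). (u, v) \<in> sorted_pairs (m+n-x+1) (x-1) \<and> Y p u v q}"
    unfolding detached_def quads_def sorted_pairs_def Y_def row_ok_iff by auto
  moreover have "card {(p, u, v, q). (u, v) \<in> crossing_pairs m n x \<and> X p u v q} =
      card {(p, u, v, q). (u, v) \<in> sorted_pairs (m+n-x+1) (x-1) \<and> Y p u v q}"
  proof (rule card_middle_bij[where f="\<lambda>p q. switch x (n-x)"])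
    show "\<And>p q. bij_betw (switch x (n-x)) (crossing_pairs m n x) (sorted_pairs (m+n-x+1) (x-1))"
      by (rule switch_bij[OF x])
    fix p q u v assume uv: "(u, v) \<in> crossing_pairs m n x"
    obtain P Q where r: "switch x (n-x) (u, v) = (P, Q)" by force
    note props = switch_props[OF x uv, unfolded r]
    have ms: "mset P + mset Q = mset u + mset v" using props(2) by simp
    have ne: "u \<noteq> []" "v \<noteq> []" "P \<noteq> []" using uv props(1) x unfolding crossing_pairs_def sorted_pairs_def by auto
    have "joins_above p u = joins_above p P" unfolding joins_above_def using col_strict_1_last ne props(3) by simp
    moreover have "joins_below v q = joins_below P q" unfolding joins_below_def using col_strict_1_hd ne props(4) by simp
    moreover have "quad_content p u v q = quad_content p P Q q" by (rule quad_content_eq[OF ms[symmetric]])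
    moreover have "(positive u \<and> positive v) = (positive P \<and> positive Q)" by (rule positive_pair_mset[OF ms[symmetric]])
    ultimately show "X p u v q = Y p (fst (switch x (n-x) (u, v))) (snd (switch x (n-x) (u, v))) q"
      unfolding X_def Y_def r by auto
  qed
  ultimately show ?thesis by simp
qed

lemma free_middle_eq_middle_plus_detached:
  assumes "1 \<le> x" "x \<le> m" "x \<le> n"
  shows "card (free_middle m n) = card (middle m n x) + card (detached (m+n-x+1) (x-1))"
  using card_quads_split[of "\<lambda>ps u v qs. row_ok m u \<and> row_ok n v \<and> joins_above ps u \<and> joins_below v qs"
      "\<lambda>ps u v qs. col_strict x u v"] card_crossing_middle[OF assms]
  unfolding free_middle_def middle_def by (simp add: conj_assoc)

(* Moving one box from the second middle row to the first changes the number of fillings with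
   overlap x exactly as it changes the number of free configurations, because the crossing
   configurations depend only on m+n. *)
lemma middle_difference:
  assumes "1 \<le> m" "2 \<le> n" "x \<le> m" "x \<le> n - 1"
  shows "int (card (middle m n x)) - int (card (middle (m+1) (n-1) x)) =
    int (card (free_middle m n)) - int (card (free_middle (m+1) (n-1)))"
proof (cases "x = 0")
  case True
  then show ?thesis unfolding middle_def free_middle_def col_strict_def by simp
next
  case False
  then show ?thesis
    using free_middle_eq_middle_plus_detached[of x m n] free_middle_eq_middle_plus_detached[of x "m+1" "n-1"]
      assms by simp
qed


lemma card_quads_split_eq:
  assumes "\<And>ps u v qs. outer_ok ps qs \<Longrightarrow> P ps u v qs \<and> Q ps u v qs \<longleftrightarrow> A ps u v qs"
    and "\<And>ps u v qs. outer_ok ps qs \<Longrightarrow> P ps u v qs \<and> \<not> Q ps u v qs \<longleftrightarrow> B ps u v qs"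
  shows "card (quads P) = card (quads A) + card (quads B)"
proof -
  have "quads (\<lambda>a b d e. P a b d e \<and> Q a b d e) = quads A"
    by (rule quads_cong) (simp add: assms(1))
  moreover have "quads (\<lambda>a b d e. P a b d e \<and> \<not> Q a b d e) = quads B"
    by (rule quads_cong) (simp add: assms(2))
  ultimately show ?thesis using card_quads_split[of P Q] by simp
qed

lemma card_quads_swap: "card (quads P) = card (quads (\<lambda>ps u v qs. P ps v u qs))"
proof (rule bij_betw_same_card[of "\<lambda>(p, u, v, q). (p, v, u, q)"],
    rule bij_betw_byWitness[where f'="\<lambda>(p, u, v, q). (p, v, u, q)"])
  have "\<And>p u v q. quad_content p u v q = quad_content p v u q" unfolding quad_content_def by (simp add: ac_simps)
  then show "(\<lambda>(p, u, v, q). (p, v, u, q)) ` quads P \<subseteq> quads (\<lambda>ps u v qs. P ps v u qs)"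
    "(\<lambda>(p, u, v, q). (p, v, u, q)) ` quads (\<lambda>ps u v qs. P ps v u qs) \<subseteq> quads P"
    unfolding quads_def by auto
qed auto

(* If u does not continue the last sigma row R, then u followed by the first
   entry of R is sorted; the configurations in which this extended row moreover satisfies the
   full overlap with v are the fillings in which R and u are merged into one row. *)
definition sigma_merged :: "nat \<Rightarrow> nat \<Rightarrow> quad set" where
  "sigma_merged m n = quads (\<lambda>ps u v qs. row_ok m u \<and> row_ok n v \<and> ps \<noteq> [] \<and> \<not> col_strict 1 (last ps) u \<and>
     joins_below v qs \<and> col_strict (m+1) (u @ [last ps ! 0]) v)"

lemma not_joins_above_iff:
  "u \<noteq> [] \<Longrightarrow> (sorted u \<and> \<not> joins_above p u) = (sorted (u @ [last p ! 0]) \<and> p \<noteq> [])"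
  unfolding joins_above_def using col_strict_1_last sorted_snoc_iff by auto

lemma card_sigma_capped_crossing:
  assumes m: "1 \<le> m" "m+1 \<le> n"
  shows "card (quads (\<lambda>ps u v qs. row_ok m u \<and> row_ok n v \<and> joins_below v qs \<and> \<not> joins_above ps u \<and>
      \<not> col_strict (m+1) (u @ [last ps ! 0]) v)) =
    card (quads (\<lambda>ps u v qs. row_ok n u \<and> row_ok m v \<and> joins_below u qs \<and> \<not> joins_above ps u))"
proof -
  define X where "X p u v q \<longleftrightarrow> outer_ok p q \<and> count (quad_content p u v q) = c \<and>
    positive u \<and> positive v \<and> p \<noteq> [] \<and> joins_below v q" for p u v q
  define Y where "Y p u v q \<longleftrightarrow> outer_ok p q \<and> count (quad_content p u v q) = c \<and>
    positive u \<and> positive v \<and> p \<noteq> [] \<and> joins_below u q" for p u v q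
  have "quads (\<lambda>ps u v qs. row_ok m u \<and> row_ok n v \<and> joins_below v qs \<and> \<not> joins_above ps u \<and>
      \<not> col_strict (m+1) (u @ [last ps ! 0]) v) =
    {(p, u, v, q). (u, v) \<in> capped_crossing (last p ! 0) m n \<and> X p u v q}" (is "?A = ?B")
  proof (rule set_eqI)
    fix z :: quad
    obtain p u v q where zz: "z = (p, u, v, q)" by (cases z) blast
    have "length u = m \<Longrightarrow> u \<noteq> []" using m by auto
    then show "z \<in> ?A \<longleftrightarrow> z \<in> ?B"
      using not_joins_above_iff[of u p] unfolding zz quads_def capped_crossing_def X_def row_ok_iff by auto
  qed
  moreover have "quads (\<lambda>ps u v qs. row_ok n u \<and> row_ok m v \<and> joins_below u qs \<and> \<not> joins_above ps u) =
    {(p, u, v, q). (u, v) \<in> capped_pairs (last p ! 0) m n \<and> Y p u v q}" (is "?A = ?B")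
  proof (rule set_eqI)
    fix z :: quad
    obtain p u v q where zz: "z = (p, u, v, q)" by (cases z) blast
    have "length u = n \<Longrightarrow> u \<noteq> []" using m by auto
    then show "z \<in> ?A \<longleftrightarrow> z \<in> ?B"
      using not_joins_above_iff[of u p] unfolding zz quads_def capped_pairs_def Y_def row_ok_iff by auto
  qed
  moreover have "card {(p, u, v, q). (u, v) \<in> capped_crossing (last p ! 0) m n \<and> X p u v q} =
      card {(p, u, v, q). (u, v) \<in> capped_pairs (last p ! 0) m n \<and> Y p u v q}"
  proof (rule card_middle_bij[where f="\<lambda>p q. capped_switch (last p ! 0) m n"])
    show "\<And>p q. bij_betw (capped_switch (last p ! 0) m n) (capped_crossing (last p ! 0) m n) (capped_pairs (last p ! 0) m n)"
      by (rule capped_switch_bij[OF m(2)])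
    fix p q u v assume uv: "(u, v) \<in> capped_crossing (last p ! 0) m n"
    obtain P Q where r: "capped_switch (last p ! 0) m n (u, v) = (P, Q)" by force
    note props = capped_switch_props[OF m(2) uv, unfolded r]
    have ms: "mset P + mset Q = mset u + mset v" using props(3) by simp
    have ne: "v \<noteq> []" "P \<noteq> []" using uv props(1) m unfolding capped_crossing_def capped_pairs_def by auto
    have "joins_below v q = joins_below P q" unfolding joins_below_def using col_strict_1_hd ne props(4) by simp
    moreover have "quad_content p u v q = quad_content p P Q q" by (rule quad_content_eq[OF ms[symmetric]])
    moreover have "(positive u \<and> positive v) = (positive P \<and> positive Q)" by (rule positive_pair_mset[OF ms[symmetric]])
    ultimately show "X p u v q = Y p (fst (capped_switch (last p ! 0) m n (u, v))) (snd (capped_switch (last p ! 0) m n (u, v))) q"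
      unfolding X_def Y_def r by auto
  qed
  ultimately show ?thesis by simp
qed

lemma free_plus_sigma_merged:
  assumes m: "1 \<le> m" "m+1 \<le> n"
  shows "card (free_middle m n) + card (sigma_merged m n) = card (detached n m)"
proof -
  define Z where "Z = quads (\<lambda>ps u v qs. row_ok m u \<and> row_ok n v \<and> joins_below v qs)"
  define ZM where "ZM = quads (\<lambda>ps u v qs. row_ok m u \<and> row_ok n v \<and> joins_below v qs \<and> \<not> joins_above ps u)"
  define ZD where "ZD = quads (\<lambda>ps u v qs. row_ok n u \<and> row_ok m v \<and> joins_below u qs \<and> \<not> joins_above ps u)"
  have "card Z = card (free_middle m n) + card ZM"
    unfolding Z_def ZM_def free_middle_def by (rule card_quads_split_eq[where Q="\<lambda>ps u v qs. joins_above ps u"]) auto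
  moreover have "card ZM = card (sigma_merged m n) + card ZD"
    unfolding ZM_def ZD_def sigma_merged_def card_sigma_capped_crossing[OF m, symmetric]
    by (rule card_quads_split_eq[where Q="\<lambda>ps u v qs. col_strict (m+1) (u @ [last ps ! 0]) v"])
      (auto simp: joins_above_def)
  moreover have "card Z = card (detached n m) + card ZD"
    unfolding Z_def ZD_def detached_def card_quads_swap[of "\<lambda>ps u v qs. row_ok m u \<and> row_ok n v \<and> joins_below v qs"]
    by (rule card_quads_split_eq[where Q="\<lambda>ps u v qs. joins_above ps u"]) auto
  ultimately show ?thesis by simp
qed


(* The tau side.  Its sentinel is the corner entry of the first tau row, its last entry. *)
definition tau_corner :: "nat list list \<Rightarrow> nat" where
  "tau_corner qs = hd qs ! (length (hd qs) - 1)"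

(* If v is not continued by the first tau row, then v preceded by the corner entry is sorted;
   the configurations in which this extended row moreover satisfies the full overlap with u
   are the fillings in which v and the first tau row are merged into one row. *)
definition tau_merged :: "nat \<Rightarrow> nat \<Rightarrow> quad set" where
  "tau_merged m n = quads (\<lambda>ps u v qs. row_ok (m+1) u \<and> row_ok (n-1) v \<and> joins_above ps u \<and> qs \<noteq> [] \<and>
     \<not> col_strict 1 v (hd qs) \<and> col_strict n u (tau_corner qs # v))"

lemma not_joins_below_iff:
  assumes v: "v \<noteq> []"
  shows "(sorted v \<and> \<not> joins_below v q) = (sorted (tau_corner q # v) \<and> q \<noteq> [])"
  unfolding joins_below_def tau_corner_def col_strict_1_hd[OF v] sorted_Cons_iff[OF v] by auto

lemma card_tau_headed_crossing:
  assumes m: "1 \<le> m" "2 \<le> n" "n \<le> m+1"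
  shows "card (quads (\<lambda>ps u v qs. row_ok (m+1) u \<and> row_ok (n-1) v \<and> joins_above ps u \<and> \<not> joins_below v qs \<and>
      \<not> col_strict n u (tau_corner qs # v))) =
    card (quads (\<lambda>ps u v qs. row_ok (m+1) u \<and> row_ok (n-1) v \<and> joins_above ps u \<and> \<not> joins_below u qs))"
proof -
  define X where "X p u v q \<longleftrightarrow> outer_ok p q \<and> count (quad_content p u v q) = c \<and>
    positive u \<and> positive v \<and> joins_above p u \<and> q \<noteq> []" for p u v q
  have "quads (\<lambda>ps u v qs. row_ok (m+1) u \<and> row_ok (n-1) v \<and> joins_above ps u \<and> \<not> joins_below v qs \<and>
      \<not> col_strict n u (tau_corner qs # v)) =
    {(p, u, v, q). (u, v) \<in> headed_crossing (tau_corner q) m n \<and> X p u v q}" (is "?A = ?B")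
  proof (rule set_eqI)
    fix z :: quad
    obtain p u v q where zz: "z = (p, u, v, q)" by (cases z) blast
    have "length v = n - 1 \<Longrightarrow> v \<noteq> []" using m by auto
    then show "z \<in> ?A \<longleftrightarrow> z \<in> ?B"
      using not_joins_below_iff[of v q] unfolding zz quads_def headed_crossing_def X_def row_ok_iff by auto
  qed
  moreover have "quads (\<lambda>ps u v qs. row_ok (m+1) u \<and> row_ok (n-1) v \<and> joins_above ps u \<and> \<not> joins_below u qs) =
    {(p, u, v, q). (u, v) \<in> headed_pairs (tau_corner q) m n \<and> X p u v q}" (is "?A = ?B")
  proof (rule set_eqI)
    fix z :: quad
    obtain p u v q where zz: "z = (p, u, v, q)" by (cases z) blast
    have "length u = m + 1 \<Longrightarrow> u \<noteq> []" by auto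
    then show "z \<in> ?A \<longleftrightarrow> z \<in> ?B"
      using not_joins_below_iff[of u q] unfolding zz quads_def headed_pairs_def X_def row_ok_iff by auto
  qed
  moreover have "card {(p, u, v, q). (u, v) \<in> headed_crossing (tau_corner q) m n \<and> X p u v q} =
      card {(p, u, v, q). (u, v) \<in> headed_pairs (tau_corner q) m n \<and> X p u v q}"
  proof (rule card_middle_bij[where f="\<lambda>p q. headed_switch (tau_corner q) m n"])
    show "\<And>p q. bij_betw (headed_switch (tau_corner q) m n) (headed_crossing (tau_corner q) m n)
        (headed_pairs (tau_corner q) m n)"
      using headed_switch_bij m by simp
    fix p q u v assume uv: "(u, v) \<in> headed_crossing (tau_corner q) m n"
    obtain P Q where r: "headed_switch (tau_corner q) m n (u, v) = (P, Q)" by force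
    have n1: "1 \<le> n" using m by simp
    note props = headed_switch_props[OF n1 m(3) uv, unfolded r]
    have ms: "mset P + mset Q = mset u + mset v" using props(3) by simp
    have ne: "u \<noteq> []" "P \<noteq> []" using uv props(1) unfolding headed_crossing_def headed_pairs_def by auto
    have "joins_above p u = joins_above p P" unfolding joins_above_def using col_strict_1_last ne props(4) by simp
    moreover have "quad_content p u v q = quad_content p P Q q" by (rule quad_content_eq[OF ms[symmetric]])
    moreover have "(positive u \<and> positive v) = (positive P \<and> positive Q)" by (rule positive_pair_mset[OF ms[symmetric]])
    ultimately show "X p u v q = X p (fst (headed_switch (tau_corner q) m n (u, v))) (snd (headed_switch (tau_corner q) m n (u, v))) q"
      unfolding X_def r by auto
  qed
  ultimately show ?thesis by simp
qed

lemma detached_eq_free_plus_tau_merged: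
  assumes m: "1 \<le> m" "2 \<le> n" "n \<le> m+1"
  shows "card (detached (m+1) (n-1)) = card (free_middle (m+1) (n-1)) + card (tau_merged m n)"
proof -
  define Y where "Y = quads (\<lambda>ps u v qs. row_ok (m+1) u \<and> row_ok (n-1) v \<and> joins_above ps u)"
  define YT where "YT = quads (\<lambda>ps u v qs. row_ok (m+1) u \<and> row_ok (n-1) v \<and> joins_above ps u \<and> \<not> joins_below v qs)"
  define YD where "YD = quads (\<lambda>ps u v qs. row_ok (m+1) u \<and> row_ok (n-1) v \<and> joins_above ps u \<and> \<not> joins_below u qs)"
  have "card Y = card (free_middle (m+1) (n-1)) + card YT"
    unfolding Y_def YT_def free_middle_def by (rule card_quads_split_eq[where Q="\<lambda>ps u v qs. joins_below v qs"]) auto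
  moreover have "card YT = card (tau_merged m n) + card YD"
    unfolding YT_def YD_def tau_merged_def card_tau_headed_crossing[OF m, symmetric]
    by (rule card_quads_split_eq[where Q="\<lambda>ps u v qs. col_strict n u (tau_corner qs # v)"])
      (auto simp: joins_below_def)
  moreover have "card Y = card (detached (m+1) (n-1)) + card YD"
    unfolding Y_def YD_def detached_def by (rule card_quads_split_eq[where Q="\<lambda>ps u v qs. joins_below u qs"]) auto
  ultimately show ?thesis by simp
qed


lemma sigma_tail_overlap:
  assumes "butlast \<sigma> \<noteq> []"
  shows "last (butlast \<sigma>b) \<le> last (butlast \<sigma>) \<and> last (butlast \<sigma>b) \<le> last \<sigma>"
proof -
  define s where "s = length \<sigma>"
  have "0 < length (butlast \<sigma>)" using assms by blast
  then have s2: "2 \<le> s" unfolding s_def by simp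
  have "Suc (s - 2) = s - 1" using s2 by simp
  moreover have "\<sigma> \<noteq> []" using assms by auto
  ultimately have "last \<sigma> = \<sigma> ! Suc (s - 2)" using s_def by (simp add: last_conv_nth)
  moreover have "last (butlast \<sigma>b) = \<sigma>b ! (s - 2)" "last (butlast \<sigma>) = \<sigma> ! (s - 2)"
    using last_butlast_nth[of \<sigma>b] last_butlast_nth[of \<sigma>] lsb s2 s_def by simp_all
  ultimately show ?thesis using Vs[of "s-2"] s2 unfolding s_def by simp
qed

lemma tau_head_overlap:
  assumes "tl \<tau> \<noteq> []"
  shows "hd (tl \<tau>b) \<le> hd (tl \<tau>) \<and> hd (tl \<tau>b) \<le> hd \<tau>"
proof -
  have "1 < length \<tau>" "1 < length \<tau>b" using assms ltb by (cases \<tau>; auto)+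
  moreover have "hd (tl xs) = xs ! 1" "hd xs = xs ! 0" if "1 < length xs" for xs :: "nat list"
    using that by (cases xs; cases "tl xs"; auto)+
  ultimately show ?thesis using Vt[of 1] by simp
qed

abbreviation sigma_split :: "nat \<Rightarrow> nat \<Rightarrow> quad set" where
  "sigma_split m n \<equiv> split_fillings (butlast \<sigma>) (butlast \<sigma>b) (m + last \<sigma>) n (m+1) \<tau> \<tau>b c"

lemma sigma_merged_split_iff:
  assumes ne: "\<sigma> \<noteq> []" and lu: "length u = m" and m: "1 \<le> m"
    and lp: "length ps' = length (butlast \<sigma>)" and lR: "length R = last \<sigma>"
  shows "(ps' @ [R], u, v, qs) \<in> sigma_merged m n \<longleftrightarrow> (ps', u @ R, v, qs) \<in> sigma_split m n"
proof -
  have u: "u \<noteq> []" using lu m by auto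
  have "1 \<le> last \<sigma>" using pos_s ne by simp
  then have R: "R \<noteq> []" using lR by auto
  have W: "row_filling \<sigma> (butlast \<sigma>b) (ps' @ [R]) \<longleftrightarrow> row_filling (butlast \<sigma>) (butlast (butlast \<sigma>b)) ps' \<and>
      row_ok (last \<sigma>) R \<and> (butlast \<sigma> \<noteq> [] \<longrightarrow> col_strict (last (butlast \<sigma>b)) (last ps') R)"
    using row_filling_snoc[of "butlast \<sigma>b" "butlast \<sigma>" ps' "last \<sigma>" R] lsb lp ne by simp
  have below: "row_filling \<tau> (tl \<tau>b) qs \<Longrightarrow> joins_below v qs = (\<tau> \<noteq> [] \<longrightarrow> col_strict (hd \<tau>b) v (hd qs))"
    unfolding joins_below_def using row_filling_length[of \<tau> "tl \<tau>b" qs] hdtb by fastforce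
  have content: "quad_content (ps' @ [R]) u v qs = quad_content ps' (u @ R) v qs"
    unfolding quad_content_def by (simp add: ac_simps)
  have merged: "row_ok (m + last \<sigma>) (u @ R) \<longleftrightarrow> row_ok m u \<and> row_ok (last \<sigma>) R \<and> last u \<le> R!0"
    by (rule row_ok_append[OF lu u R])
  have cap: "\<not> col_strict 1 (last (ps' @ [R])) u \<longleftrightarrow> last u \<le> R!0" using col_strict_1_last[OF u] by auto
  (* the overlap with the row above only sees the part R of the merged row *)
  have above: "col_strict (last (butlast \<sigma>b)) (last ps') (u @ R) \<longleftrightarrow> col_strict (last (butlast \<sigma>b)) (last ps') R"
    if "butlast \<sigma> \<noteq> []"
    using sigma_tail_overlap[OF that] lR by (intro col_strict_cong_right) (auto simp: nth_append)
  (* the overlap with v only sees u and the first entry of R *)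
  have middle: "col_strict (m+1) (u @ R) v \<longleftrightarrow> col_strict (m+1) (u @ [R!0]) v"
    by (rule col_strict_cong_left) (use lu R in \<open>auto simp: nth_append less_Suc_eq\<close>)
  show ?thesis
    unfolding sigma_merged_def quads_def split_fillings_def outer_ok_def
    using W merged cap above middle below content by auto
qed

lemma card_sigma_merged:
  assumes ne: "\<sigma> \<noteq> []" and m: "1 \<le> m"
  shows "card (sigma_merged m n) = card (sigma_split m n)"
proof -
  let ?cut = "\<lambda>(ps', w, v, qs). (ps' @ [drop m w], take m w, v, qs)"
  have "inj_on ?cut (sigma_split m n)"
  proof (rule inj_onI)
    fix a b assume "a \<in> sigma_split m n" "b \<in> sigma_split m n" and e: "?cut a = ?cut b"
    obtain ps' w v qs where a: "a = (ps', w, v, qs)" by (cases a) blast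
    obtain ps'' w' v' qs' where b: "b = (ps'', w', v', qs')" by (cases b) blast
    have "ps' = ps'' \<and> take m w @ drop m w = take m w' @ drop m w' \<and> v = v' \<and> qs = qs'"
      using e unfolding a b by simp
    then show "a = b" unfolding a b by simp
  qed
  moreover have "?cut ` sigma_split m n = sigma_merged m n"
  proof (intro set_eqI iffI)
    fix z assume "z \<in> ?cut ` sigma_split m n"
    then obtain ps' w v qs where z: "z = ?cut (ps', w, v, qs)" and S: "(ps', w, v, qs) \<in> sigma_split m n" by auto
    have "row_filling (butlast \<sigma>) (butlast (butlast \<sigma>b)) ps'" "row_ok (m + last \<sigma>) w"
      using S unfolding split_fillings_def by auto
    then have l: "length w = m + last \<sigma>" "length ps' = length (butlast \<sigma>)"
      using row_filling_length unfolding row_ok_def by auto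
    then show "z \<in> sigma_merged m n"
      using sigma_merged_split_iff[OF ne _ m, of "take m w" ps' "drop m w" v qs] S z by simp
  next
    fix z assume M: "z \<in> sigma_merged m n"
    obtain ps u v qs where z: "z = (ps, u, v, qs)" by (cases z) blast
    have l: "length u = m" "ps \<noteq> []" "length ps = length \<sigma>" "length (last ps) = last \<sigma>"
      using M row_filling_length ne unfolding z sigma_merged_def quads_def outer_ok_def row_filling_def row_ok_def
      by (auto simp: last_conv_nth)
    then have "(butlast ps @ [last ps], u, v, qs) \<in> sigma_merged m n" using M z by simp
    then have "(butlast ps, u @ last ps, v, qs) \<in> sigma_split m n"
      using sigma_merged_split_iff[OF ne l(1) m, of "butlast ps" "last ps" v qs n] l by simp
    moreover have "z = ?cut (butlast ps, u @ last ps, v, qs)" using z l by simp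
    ultimately show "z \<in> ?cut ` sigma_split m n" by blast
  qed
  ultimately show ?thesis using card_image by fastforce
qed

lemma ov_schur_sigma_merged:
  assumes ne: "\<sigma> \<noteq> []" and m: "1 \<le> m" "m + 1 \<le> n"
  shows "ov_schur (butlast \<sigma> @ [m + last \<sigma>, n] @ \<tau>) (butlast \<sigma>b @ [m + 1] @ \<tau>b) c = int (card (sigma_merged m n))"
proof -
  have ls: "1 \<le> last \<sigma>" using pos_s ne by simp
  have lbb: "length (butlast \<sigma>b) = length (butlast \<sigma>)" using lsb by simp
  have "overlap_shape (butlast \<sigma> @ [m + last \<sigma>, n] @ \<tau>) (butlast \<sigma>b @ [m + 1] @ \<tau>b)"
  proof (rule overlap_shape_split[OF lbb ltb _ _ _ _ _ Vt])
    fix i assume "Suc i < length (butlast \<sigma>)"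
    then show "butlast \<sigma>b ! i \<le> butlast \<sigma> ! i \<and> butlast \<sigma>b ! i \<le> butlast \<sigma> ! Suc i"
      using Vs[of i] lsb by (simp add: nth_butlast)
  next
    assume "butlast \<sigma> \<noteq> []"
    then show "last (butlast \<sigma>b) \<le> last (butlast \<sigma>) \<and> last (butlast \<sigma>b) \<le> m + last \<sigma>"
      using sigma_tail_overlap by fastforce
  next
    assume nt: "\<tau> \<noteq> []"
    have "1 \<le> hd \<tau>" using pos_t nt by simp
    then show "hd \<tau>b \<le> n \<and> hd \<tau>b \<le> hd \<tau>" using hdtb[OF nt] m by simp
  qed (use ls m in simp_all)
  then show ?thesis using ov_schur_split[OF _ lbb ltb] card_sigma_merged[OF ne m(1)] by simp
qed

lemma sigma_merged_empty: "\<sigma> = [] \<Longrightarrow> sigma_merged m n = {}"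
  unfolding sigma_merged_def quads_def using outer_ok_nonempty by auto


abbreviation tau_split :: "nat \<Rightarrow> nat \<Rightarrow> quad set" where
  "tau_split m n \<equiv> split_fillings \<sigma> \<sigma>b (m+1) (n - 1 + hd \<tau>) n (tl \<tau>) (tl \<tau>b) c"

lemma tau_merged_split_iff:
  assumes ne: "\<tau> \<noteq> []" and n: "2 \<le> n" and lT: "length T = hd \<tau>"
    and lq: "length qs' = length (tl \<tau>)" and lv: "length v = n - 1"
  shows "(ps, u, v, T # qs') \<in> tau_merged m n \<longleftrightarrow> (ps, u, T @ v, qs') \<in> tau_split m n"
proof -
  have lt: "1 \<le> hd \<tau>" using pos_t ne by simp
  then have T: "T \<noteq> []" using lT by auto
  have v: "v \<noteq> []" using lv n by auto
  have W: "row_filling \<tau> (tl \<tau>b) (T # qs') \<longleftrightarrow> row_ok (hd \<tau>) T \<and> row_filling (tl \<tau>) (tl (tl \<tau>b)) qs' \<and>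
      (tl \<tau> \<noteq> [] \<longrightarrow> col_strict (hd (tl \<tau>b)) T (hd qs'))"
    using row_filling_Cons[of "tl \<tau>b" "tl \<tau>" qs' "hd \<tau>" T] ltb lq ne by simp
  have above: "row_filling \<sigma> (butlast \<sigma>b) ps \<Longrightarrow> joins_above ps u = (\<sigma> \<noteq> [] \<longrightarrow> col_strict (last \<sigma>b) (last ps) u)"
    unfolding joins_above_def using row_filling_length[of \<sigma> "butlast \<sigma>b" ps] lastsb by fastforce
  have content: "quad_content ps u v (T # qs') = quad_content ps u (T @ v) qs'"
    unfolding quad_content_def by (simp add: ac_simps)
  have merged: "row_ok (n - 1 + hd \<tau>) (T @ v) \<longleftrightarrow> row_ok (hd \<tau>) T \<and> row_ok (n-1) v \<and> last T \<le> v!0"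
    using row_ok_append[OF lT T v, of "n-1"] by (simp add: add.commute)
  have cap: "\<not> col_strict 1 v (hd (T # qs')) \<longleftrightarrow> last T \<le> v!0"
    using col_strict_1_hd[OF v, of T] T v by (simp add: hd_conv_nth last_conv_nth not_less)
  (* the overlap with the row below only sees the part T of the merged row *)
  have below: "col_strict (hd (tl \<tau>b)) (T @ v) (hd qs') \<longleftrightarrow> col_strict (hd (tl \<tau>b)) T (hd qs')"
    if "tl \<tau> \<noteq> []"
    using tau_head_overlap[OF that] lT unfolding col_strict_def by (auto simp: nth_append)
  (* the overlap with u only sees v and the last entry of T *)
  have middle: "col_strict n u (T @ v) \<longleftrightarrow> col_strict n u (tau_corner (T # qs') # v)"
  proof (rule col_strict_cong_right)
    fix k assume k: "k < n"
    show "(T @ v) ! (k + length (T @ v) - n) = (tau_corner (T # qs') # v) ! (k + length (tau_corner (T # qs') # v) - n)"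
      using lT lv n lt k unfolding tau_corner_def by (cases k) (auto simp: nth_append)
  qed
  show ?thesis
    unfolding tau_merged_def quads_def split_fillings_def outer_ok_def
    using W merged cap below middle above content by auto
qed

lemma card_tau_merged:
  assumes ne: "\<tau> \<noteq> []" and n: "2 \<le> n"
  shows "card (tau_merged m n) = card (tau_split m n)"
proof -
  let ?cut = "\<lambda>(ps, u, w, qs). (ps, u, drop (hd \<tau>) w, take (hd \<tau>) w # qs)"
  have "inj_on ?cut (tau_split m n)"
  proof (rule inj_onI)
    fix a b assume "a \<in> tau_split m n" "b \<in> tau_split m n" and e: "?cut a = ?cut b"
    obtain ps u w qs where a: "a = (ps, u, w, qs)" by (cases a) blast
    obtain ps' u' w' qs' where b: "b = (ps', u', w', qs')" by (cases b) blast
    have "ps = ps' \<and> u = u' \<and> take (hd \<tau>) w @ drop (hd \<tau>) w = take (hd \<tau>) w' @ drop (hd \<tau>) w' \<and> qs = qs'"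
      using e unfolding a b by simp
    then show "a = b" unfolding a b by simp
  qed
  moreover have "?cut ` tau_split m n = tau_merged m n"
  proof (intro set_eqI iffI)
    fix z assume "z \<in> ?cut ` tau_split m n"
    then obtain ps u w qs where z: "z = ?cut (ps, u, w, qs)" and S: "(ps, u, w, qs) \<in> tau_split m n" by auto
    have "row_filling (tl \<tau>) (tl (tl \<tau>b)) qs" "row_ok (n - 1 + hd \<tau>) w"
      using S unfolding split_fillings_def by auto
    then have l: "length w = n - 1 + hd \<tau>" "length qs = length (tl \<tau>)"
      using row_filling_length unfolding row_ok_def by auto
    then show "z \<in> tau_merged m n"
      using tau_merged_split_iff[OF ne n, of "take (hd \<tau>) w" qs "drop (hd \<tau>) w" ps u m] S z by simp
  next
    fix z assume M: "z \<in> tau_merged m n"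
    obtain ps u v qs where z: "z = (ps, u, v, qs)" by (cases z) blast
    have q: "qs \<noteq> []" "length qs = length \<tau>" "length v = n - 1"
      and W: "row_filling \<tau> (tl \<tau>b) qs"
      using M row_filling_length unfolding z tau_merged_def quads_def outer_ok_def row_ok_def by auto
    have lh: "length (hd qs) = hd \<tau>"
      using W q ne unfolding row_filling_def row_ok_def by (auto simp: hd_conv_nth)
    have "(ps, u, v, hd qs # tl qs) \<in> tau_merged m n" using M z q by simp
    then have "(ps, u, hd qs @ v, tl qs) \<in> tau_split m n"
      using tau_merged_split_iff[OF ne n lh, of "tl qs" v ps u m] q by simp
    moreover have "z = ?cut (ps, u, hd qs @ v, tl qs)" using z q lh by simp
    ultimately show "z \<in> ?cut ` tau_split m n" by blast
  qed
  ultimately show ?thesis using card_image by fastforce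
qed

lemma ov_schur_tau_merged:
  assumes ne: "\<tau> \<noteq> []" and m: "1 \<le> m" "2 \<le> n" "n \<le> m + 1"
  shows "ov_schur (\<sigma> @ [m + 1, n - 1 + hd \<tau>] @ tl \<tau>) (\<sigma>b @ [n] @ tl \<tau>b) c = int (card (tau_merged m n))"
proof -
  have lt: "1 \<le> hd \<tau>" using pos_t ne by simp
  have ltt: "length (tl \<tau>b) = length (tl \<tau>)" using ltb by simp
  have "overlap_shape (\<sigma> @ [m + 1, n - 1 + hd \<tau>] @ tl \<tau>) (\<sigma>b @ [n] @ tl \<tau>b)"
  proof (rule overlap_shape_split[OF lsb ltt Vs])
    assume ns: "\<sigma> \<noteq> []"
    have "1 \<le> last \<sigma>" using pos_s ns by simp
    then show "last \<sigma>b \<le> last \<sigma> \<and> last \<sigma>b \<le> m + 1" using lastsb[OF ns] by simp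
  next
    assume "tl \<tau> \<noteq> []"
    then show "hd (tl \<tau>b) \<le> n - 1 + hd \<tau> \<and> hd (tl \<tau>b) \<le> hd (tl \<tau>)"
      using tau_head_overlap by fastforce
  next
    fix i assume i: "0 < i" "i < length (tl \<tau>)"
    then have "\<tau>b!Suc i \<le> \<tau>!Suc i \<and> \<tau>b!Suc i \<le> \<tau>!i" using Vt[of "Suc i"] by simp
    then show "tl \<tau>b ! i \<le> tl \<tau> ! i \<and> tl \<tau>b ! i \<le> tl \<tau> ! (i - 1)" using i ltb by (simp add: nth_tl)
  qed (use lt m in simp_all)
  then show ?thesis using ov_schur_split[OF _ lsb ltt] card_tau_merged[OF ne m(2)] by simp
qed

lemma tau_merged_empty: "\<tau> = [] \<Longrightarrow> tau_merged m n = {}"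
  unfolding tau_merged_def quads_def using outer_ok_nonempty by auto


(* The difference of free configurations, evaluated in the four cases x < m or x = m and
   x < n-1 or x = n-1: apart from a boundary case, the overlap x can be raised by one; at the
   boundaries the merged configurations appear instead. *)
lemma free_difference:
  assumes m: "1 \<le> m" and n: "2 \<le> n" and xm: "x \<le> m" and xn: "x \<le> n - 1"
  shows "int (card (free_middle m n)) - int (card (free_middle (m+1) (n-1))) =
    (if x < m then int (card (middle m n (x+1))) else - int (card (sigma_merged m n))) -
    (if x < n - 1 then int (card (middle (m+1) (n-1) (x+1))) else - int (card (tau_merged m n)))"
proof (cases "x < m"; cases "x < n - 1")
  assume "x < m" "x < n - 1"
  then show ?thesis using middle_difference[OF m n, of "x+1"] by simp
next
  assume "x < m" "\<not> x < n - 1"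
  then have "n \<le> m" "x = n - 1" using xn by auto
  then show ?thesis
    using free_middle_eq_middle_plus_detached[of n m n] detached_eq_free_plus_tau_merged[OF m n] n by simp
next
  assume "\<not> x < m" "x < n - 1"
  then have "x = m" "m + 1 \<le> n - 1" "m + 1 \<le> n" using xm by auto
  then show ?thesis
    using free_middle_eq_middle_plus_detached[of "m+1" "m+1" "n-1"] free_plus_sigma_merged[OF m, of n] n
    by simp
next
  assume "\<not> x < m" "\<not> x < n - 1"
  then have "x = m" "n = m + 1" using xm xn n by auto
  then show ?thesis
    using free_plus_sigma_merged[OF m, of n] detached_eq_free_plus_tau_merged[OF m n] by simp
qed

lemma correction_A:
  assumes "1 \<le> m" "2 \<le> n" "x \<le> m" "x \<le> n - 1"
  shows "(if x < m then ov_schur (\<sigma> @ [m, n] @ \<tau>) (\<sigma>b @ [x + 1] @ \<tau>b) c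
      else if \<sigma> = [] then 0
      else - ov_schur (butlast \<sigma> @ [m + last \<sigma>, n] @ \<tau>) (butlast \<sigma>b @ [m + 1] @ \<tau>b) c) =
    (if x < m then int (card (middle m n (x+1))) else - int (card (sigma_merged m n)))"
  using assms ov_schur_middle[of m n "x+1"] ov_schur_sigma_merged[of m n] sigma_merged_empty by auto

lemma correction_B:
  assumes "1 \<le> m" "2 \<le> n" "x \<le> m" "x \<le> n - 1"
  shows "(if x < n - 1 then ov_schur (\<sigma> @ [m + 1, n - 1] @ \<tau>) (\<sigma>b @ [x + 1] @ \<tau>b) c
      else if \<tau> = [] then 0
      else - ov_schur (\<sigma> @ [m + 1, n - 1 + hd \<tau>] @ tl \<tau>) (\<sigma>b @ [n] @ tl \<tau>b) c) =
    (if x < n - 1 then int (card (middle (m+1) (n-1) (x+1))) else - int (card (tau_merged m n)))"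
  using assms ov_schur_middle[of "m+1" "n-1" "x+1"] ov_schur_tau_merged[of m n] tau_merged_empty by auto

end

theorem lemma2p2:
  fixes \<sigma> \<tau> \<sigma>b \<tau>b :: "nat list" and m n x :: nat
  assumes "standing_hyp \<sigma> \<tau> \<sigma>b \<tau>b"
    and "1 \<le> m" and "2 \<le> n" and "x \<le> min m (n - 1)"
  shows "\<forall>c. ov_schur (\<sigma> @ [m, n] @ \<tau>) (\<sigma>b @ [x] @ \<tau>b) c
             - ov_schur (\<sigma> @ [m + 1, n - 1] @ \<tau>) (\<sigma>b @ [x] @ \<tau>b) c
           = (if x < m then ov_schur (\<sigma> @ [m, n] @ \<tau>) (\<sigma>b @ [x + 1] @ \<tau>b) c
              else if \<sigma> = [] then 0
              else - ov_schur (butlast \<sigma> @ [m + last \<sigma>, n] @ \<tau>)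
                              (butlast \<sigma>b @ [m + 1] @ \<tau>b) c)
           - (if x < n - 1 then ov_schur (\<sigma> @ [m + 1, n - 1] @ \<tau>) (\<sigma>b @ [x + 1] @ \<tau>b) c
              else if \<tau> = [] then 0
              else - ov_schur (\<sigma> @ [m + 1, n - 1 + hd \<tau>] @ tl \<tau>)
                              (\<sigma>b @ [n] @ tl \<tau>b) c)"
proof
  fix c
  interpret standing \<sigma> \<tau> \<sigma>b \<tau>b c using assms(1) by unfold_locales
  have m: "1 \<le> m" and n: "2 \<le> n" and x: "x \<le> m" "x \<le> n - 1" using assms(2-4) by auto
  note lhs = ov_schur_middle[of m n x] ov_schur_middle[of "m+1" "n-1" x]
  note rhs = correction_A[OF m n x] correction_B[OF m n x]
  (* the left-hand side only depends on the free configurations, which gives the right-hand side *)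
  show "ov_schur (\<sigma> @ [m, n] @ \<tau>) (\<sigma>b @ [x] @ \<tau>b) c - ov_schur (\<sigma> @ [m + 1, n - 1] @ \<tau>) (\<sigma>b @ [x] @ \<tau>b) c
      = (if x < m then ov_schur (\<sigma> @ [m, n] @ \<tau>) (\<sigma>b @ [x + 1] @ \<tau>b) c
         else if \<sigma> = [] then 0
         else - ov_schur (butlast \<sigma> @ [m + last \<sigma>, n] @ \<tau>) (butlast \<sigma>b @ [m + 1] @ \<tau>b) c)
      - (if x < n - 1 then ov_schur (\<sigma> @ [m + 1, n - 1] @ \<tau>) (\<sigma>b @ [x + 1] @ \<tau>b) c
         else if \<tau> = [] then 0
         else - ov_schur (\<sigma> @ [m + 1, n - 1 + hd \<tau>] @ tl \<tau>) (\<sigma>b @ [n] @ tl \<tau>b) c)"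
    unfolding rhs using lhs middle_difference[OF m n x] free_difference[OF m n x] m n x by simp
qed

end
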